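(* Let $(R,[\cdot_\lambda\cdot],\alpha,\beta)$ be a regular BiHom-Lie conformal superalgebra, let $(M,\phi,\psi)$ be a BiHom-conformal module of $R$ with $\psi$ invertible, and let $\rho$ be the corresponding representation. Define a $\lambda$-bracket on $R\oplus M$, graded by $(R\oplus M)_\theta=R_\theta\oplus M_\theta$ and with $\partial(r+m)=\partial r+\partial m$, by $$[(r+m)_\lambda(r'+m')]_M=[r_\lambda r']+\rho(r)_\lambda m'-(-1)^{|r'||m|}\rho(\alpha^{-1}\beta(r'))_{-\partial-\lambda}\,\phi\psi^{-1}(m)$$ for homogeneous $r,r'\in R$, $m,m'\in M$. Then $(R\oplus M,[\cdot_\lambda\cdot]_M,\alpha+\phi,\beta+\psi)$ is a BiHom-Lie conformal superalgebra, where $(\alpha+\phi)(r+m)=\alpha(r)+\phi(m)$ and $(\beta+\psi)(r+m)=\beta(r)+\psi(m)$.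
   Context: All spaces are over $\mathbb{C}$. For a $\mathbb{C}[\partial]$-module $V$, $V[\lambda]=\mathbb{C}[\lambda]\otimes V$. $|a|$ denotes the parity of a homogeneous element. Substitution $\lambda\mapsto-\lambda-\partial$ means: expand in powers of $\lambda$ and replace $\lambda$ by $-\lambda-\partial$, $\partial$ acting on the coefficients. A BiHom-Lie conformal superalgebra $(R,[\cdot_\lambda\cdot],\alpha,\beta)$ is a $\mathbb{Z}_2$-graded $\mathbb{C}[\partial]$-module $R$ with two commuting linear maps $\alpha,\beta$ and a $\mathbb{C}$-linear map $R\otimes R\to R[\lambda]$, $a\otimes b\mapsto[a_\lambda b]$, with $[R_{i\,\lambda}R_j]\subseteq R_{i+j}[\lambda]$, such that for all homogeneous $a,b,c$: (1) $\alpha\partial=\partial\alpha$, $\beta\partial=\partial\beta$; (2) $\alpha([a_\lambda b])=[\alpha(a)_\lambda\alpha(b)]$, $\beta([a_\lambda b])=[\beta(a)_\lambda\beta(b)]$; (3) $[(\partial a)_\lambda b]=-\lambda[a_\lambda b]$, $[a_\lambda(\partial b)]=(\partial+\lambda)[a_\lambda b]$; (4) $[\beta(a)_\lambda\alpha(b)]=-(-1)^{|a||b|}[\beta(b)_{-\lambda-\partial}\alpha(a)]$; (5) $[\alpha\beta(a)_\lambda[b_\mu c]]=[[\beta(a)_\lambda b]_{\lambda+\mu}\beta(c)]+(-1)^{|a||b|}[\beta(b)_\mu[\alpha(a)_\lambda c]]$. It is regular if $\alpha,\beta$ are bijective. A BiHom-conformal module $(M,\phi,\psi)$ of $R$ is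 a $\mathbb{Z}_2$-graded $\mathbb{C}[\partial]$-module $M$ with linear maps $\phi,\psi:M\to M$ and a $\mathbb{C}$-linear map $\rho$ assigning to each $a\in R$ a $\mathbb{C}$-linear map $\rho(a)_\lambda:M\to M[\lambda]$ with $\rho(a)_\lambda(M_\theta)\subseteq M_{\theta+|a|}[\lambda]$ (the representation), such that for all homogeneous $a,b\in R$: $\rho(\partial a)_\lambda=-\lambda\rho(a)_\lambda$, $\rho(a)_\lambda\partial=(\lambda+\partial)\rho(a)_\lambda$; $\phi\psi=\psi\phi$, $\psi\partial=\partial\psi$, $\phi\partial=\partial\phi$; $\phi\rho(a)_\lambda=\rho(\alpha(a))_\lambda\phi$, $\psi\rho(a)_\lambda=\rho(\beta(a))_\lambda\psi$; and $\rho([\beta(a)_\lambda b])_{\lambda+\mu}\psi=\rho(\alpha\beta(a))_\lambda\rho(b)_\mu-(-1)^{|a||b|}\rho(\beta(b))_\mu\rho(\alpha(a))_\lambda$. Here if $[x_\lambda y]=\sum_n\lambda^nc_n$ then $\rho([x_\lambda y])_{\lambda+\mu}=\sum_n\lambda^n\rho(c_n)_{\lambda+\mu}$, and maps are extended $\mathbb{C}[\lambda,\mu]$-linearly. *)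

theory Defs
  imports Complex_Main "HOL-Library.Product_Plus"
begin

(* Polynomials in one variable lambda with coefficients in V: p n = coefficient of lambda^n,
   finitely supported. Two-variable polynomials: q i j = coefficient of lambda^i mu^j. *)

definition lpoly :: "(nat \<Rightarrow> 'v::zero) \<Rightarrow> bool" where
  "lpoly p \<longleftrightarrow> finite {n. p n \<noteq> 0}"

definition lshift :: "(nat \<Rightarrow> 'v::zero) \<Rightarrow> nat \<Rightarrow> 'v" where
  "lshift p n = (if n = 0 then 0 else p (n - 1))"

(* substitution lambda |-> -lambda - d, d acting on the coefficients:
   sum_n (-lambda-d)^n p_n = sum_k lambda^k sum_n (-1)^n (n choose k) d^(n-k) p_n *)
definition subst_neg ::
  "(complex \<Rightarrow> 'v \<Rightarrow> 'v) \<Rightarrow> ('v \<Rightarrow> 'v) \<Rightarrow> (nat \<Rightarrow> 'v::comm_monoid_add) \<Rightarrow> nat \<Rightarrow> 'v" where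
  "subst_neg s d p k = (\<Sum>n\<in>{n. p n \<noteq> 0}. s ((-1) ^ n * of_nat (n choose k)) ((d ^^ (n - k)) (p n)))"

(* given q n = a polynomial in nu, the two-variable polynomial
   sum_n lambda^n (q n evaluated at nu = lambda + mu); coefficient of lambda^i mu^j *)
definition at_sum ::
  "(complex \<Rightarrow> 'v \<Rightarrow> 'v) \<Rightarrow> (nat \<Rightarrow> nat \<Rightarrow> 'v::comm_monoid_add) \<Rightarrow> nat \<Rightarrow> nat \<Rightarrow> 'v" where
  "at_sum s q i j = (\<Sum>n\<le>i. s (of_nat ((i - n + j) choose j)) (q n (i - n + j)))"

(* parity: False = even (0), True = odd (1); (-1)^(|a||b|) *)
definition psign :: "bool \<Rightarrow> bool \<Rightarrow> complex" where
  "psign i j = (if i \<and> j then -1 else 1)"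

definition graded_cmodule ::
  "(complex \<Rightarrow> 'v \<Rightarrow> 'v::ab_group_add) \<Rightarrow> (bool \<Rightarrow> 'v set) \<Rightarrow> ('v \<Rightarrow> 'v) \<Rightarrow> bool" where
  "graded_cmodule s G d \<longleftrightarrow>
     Vector_Spaces.vector_space s \<and>
     (\<forall>\<theta>. module.subspace s (G \<theta>)) \<and>
     G False \<inter> G True = {0} \<and>
     (\<forall>v. \<exists>a\<in>G False. \<exists>b\<in>G True. v = a + b) \<and>
     Vector_Spaces.linear s s d \<and>
     (\<forall>\<theta>. d ` G \<theta> \<subseteq> G \<theta>)"

definition comp :: "(bool \<Rightarrow> 'v::ab_group_add set) \<Rightarrow> bool \<Rightarrow> 'v \<Rightarrow> 'v" where
  "comp G i v = (THE u. u \<in> G i \<and> v - u \<in> G (\<not> i))"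

(* BiHom-Lie conformal superalgebra (R, [._. .], alpha, beta);
   br a b n = coefficient of lambda^n in [a_lambda b] *)
definition bihom_lcsa ::
  "(complex \<Rightarrow> 'r \<Rightarrow> 'r::ab_group_add) \<Rightarrow> (bool \<Rightarrow> 'r set) \<Rightarrow> ('r \<Rightarrow> 'r)
   \<Rightarrow> ('r \<Rightarrow> 'r \<Rightarrow> nat \<Rightarrow> 'r) \<Rightarrow> ('r \<Rightarrow> 'r) \<Rightarrow> ('r \<Rightarrow> 'r) \<Rightarrow> bool" where
  "bihom_lcsa s G d br \<alpha> \<beta> \<longleftrightarrow>
     graded_cmodule s G d \<and>
     Vector_Spaces.linear s s \<alpha> \<and> Vector_Spaces.linear s s \<beta> \<and> \<alpha> \<circ> \<beta> = \<beta> \<circ> \<alpha> \<and>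
     (\<forall>\<theta>. \<alpha> ` G \<theta> \<subseteq> G \<theta> \<and> \<beta> ` G \<theta> \<subseteq> G \<theta>) \<and>
     (\<forall>b n. Vector_Spaces.linear s s (\<lambda>a. br a b n)) \<and>
     (\<forall>a n. Vector_Spaces.linear s s (\<lambda>b. br a b n)) \<and>
     (\<forall>a b. lpoly (br a b)) \<and>
     (\<forall>i j a b n. a \<in> G i \<longrightarrow> b \<in> G j \<longrightarrow> br a b n \<in> G (i \<noteq> j)) \<and>
     \<alpha> \<circ> d = d \<circ> \<alpha> \<and> \<beta> \<circ> d = d \<circ> \<beta> \<and>
     (\<forall>a b n. \<alpha> (br a b n) = br (\<alpha> a) (\<alpha> b) n) \<and>
     (\<forall>a b n. \<beta> (br a b n) = br (\<beta> a) (\<beta> b) n) \<and>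
     (\<forall>a b n. br (d a) b n = - lshift (br a b) n) \<and>
     (\<forall>a b n. br a (d b) n = d (br a b n) + lshift (br a b) n) \<and>
     (\<forall>i j a b. a \<in> G i \<longrightarrow> b \<in> G j \<longrightarrow>
        (\<forall>n. br (\<beta> a) (\<alpha> b) n = s (- psign i j) (subst_neg s d (br (\<beta> b) (\<alpha> a)) n))) \<and>
     (\<forall>i j k a b c. a \<in> G i \<longrightarrow> b \<in> G j \<longrightarrow> c \<in> G k \<longrightarrow>
        (\<forall>p q. br (\<alpha> (\<beta> a)) (br b c q) p =
               at_sum s (\<lambda>n. br (br (\<beta> a) b n) (\<beta> c)) p q
               + s (psign i j) (br (\<beta> b) (br (\<alpha> a) c p) q)))"

(* BiHom-conformal module (M, phi, psi) of R with representation rho;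
   rho a m n = coefficient of lambda^n in rho(a)_lambda m *)
definition bihom_conf_module ::
  "(complex \<Rightarrow> 'r \<Rightarrow> 'r::ab_group_add) \<Rightarrow> (bool \<Rightarrow> 'r set) \<Rightarrow> ('r \<Rightarrow> 'r)
   \<Rightarrow> ('r \<Rightarrow> 'r \<Rightarrow> nat \<Rightarrow> 'r) \<Rightarrow> ('r \<Rightarrow> 'r) \<Rightarrow> ('r \<Rightarrow> 'r)
   \<Rightarrow> (complex \<Rightarrow> 'm \<Rightarrow> 'm::ab_group_add) \<Rightarrow> (bool \<Rightarrow> 'm set) \<Rightarrow> ('m \<Rightarrow> 'm)
   \<Rightarrow> ('r \<Rightarrow> 'm \<Rightarrow> nat \<Rightarrow> 'm) \<Rightarrow> ('m \<Rightarrow> 'm) \<Rightarrow> ('m \<Rightarrow> 'm) \<Rightarrow> bool" where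
  "bihom_conf_module sR GR dR br \<alpha> \<beta> sM GM dM \<rho> \<phi> \<psi> \<longleftrightarrow>
     graded_cmodule sM GM dM \<and>
     Vector_Spaces.linear sM sM \<phi> \<and> Vector_Spaces.linear sM sM \<psi> \<and>
     (\<forall>\<theta>. \<phi> ` GM \<theta> \<subseteq> GM \<theta> \<and> \<psi> ` GM \<theta> \<subseteq> GM \<theta>) \<and>
     (\<forall>m n. Vector_Spaces.linear sR sM (\<lambda>a. \<rho> a m n)) \<and>
     (\<forall>a n. Vector_Spaces.linear sM sM (\<lambda>m. \<rho> a m n)) \<and>
     (\<forall>a m. lpoly (\<rho> a m)) \<and>
     (\<forall>i \<theta> a m n. a \<in> GR i \<longrightarrow> m \<in> GM \<theta> \<longrightarrow> \<rho> a m n \<in> GM (i \<noteq> \<theta>)) \<and>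
     (\<forall>a m n. \<rho> (dR a) m n = - lshift (\<rho> a m) n) \<and>
     (\<forall>a m n. \<rho> a (dM m) n = dM (\<rho> a m n) + lshift (\<rho> a m) n) \<and>
     \<phi> \<circ> \<psi> = \<psi> \<circ> \<phi> \<and> \<psi> \<circ> dM = dM \<circ> \<psi> \<and> \<phi> \<circ> dM = dM \<circ> \<phi> \<and>
     (\<forall>a m n. \<phi> (\<rho> a m n) = \<rho> (\<alpha> a) (\<phi> m) n) \<and>
     (\<forall>a m n. \<psi> (\<rho> a m n) = \<rho> (\<beta> a) (\<psi> m) n) \<and>
     (\<forall>i j a b m. a \<in> GR i \<longrightarrow> b \<in> GR j \<longrightarrow>
        (\<forall>p q. at_sum sM (\<lambda>n. \<rho> (br (\<beta> a) b n) (\<psi> m)) p q =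
               \<rho> (\<alpha> (\<beta> a)) (\<rho> b m q) p - sM (psign i j) (\<rho> (\<beta> b) (\<rho> (\<alpha> a) m p) q)))"

definition prod_scale ::
  "(complex \<Rightarrow> 'r \<Rightarrow> 'r) \<Rightarrow> (complex \<Rightarrow> 'm \<Rightarrow> 'm) \<Rightarrow> complex \<Rightarrow> 'r \<times> 'm \<Rightarrow> 'r \<times> 'm" where
  "prod_scale sR sM c x = (sR c (fst x), sM c (snd x))"

definition prod_grading :: "(bool \<Rightarrow> 'r set) \<Rightarrow> (bool \<Rightarrow> 'm set) \<Rightarrow> bool \<Rightarrow> ('r \<times> 'm) set" where
  "prod_grading GR GM \<theta> = GR \<theta> \<times> GM \<theta>"

(* [(r+m)_lambda (r'+m')]_M = [r_lambda r'] + rho(r)_lambda m'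
     - (-1)^(|r'||m|) rho(alpha^-1 beta r')_(-d-lambda) phi psi^-1 (m),
   extended bilinearly via homogeneous components *)
definition sd_bracket ::
  "(bool \<Rightarrow> 'r::ab_group_add set) \<Rightarrow> ('r \<Rightarrow> 'r \<Rightarrow> nat \<Rightarrow> 'r) \<Rightarrow> ('r \<Rightarrow> 'r) \<Rightarrow> ('r \<Rightarrow> 'r)
   \<Rightarrow> (complex \<Rightarrow> 'm \<Rightarrow> 'm::ab_group_add) \<Rightarrow> (bool \<Rightarrow> 'm set) \<Rightarrow> ('m \<Rightarrow> 'm)
   \<Rightarrow> ('r \<Rightarrow> 'm \<Rightarrow> nat \<Rightarrow> 'm) \<Rightarrow> ('m \<Rightarrow> 'm) \<Rightarrow> ('m \<Rightarrow> 'm)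
   \<Rightarrow> 'r \<times> 'm \<Rightarrow> 'r \<times> 'm \<Rightarrow> nat \<Rightarrow> 'r \<times> 'm" where
  "sd_bracket GR br \<alpha> \<beta> sM GM dM \<rho> \<phi> \<psi> x y n =
     (br (fst x) (fst y) n,
      \<rho> (fst x) (snd y) n
      - (\<Sum>i\<in>UNIV. \<Sum>j\<in>UNIV. sM (psign i j)
            (subst_neg sM dM (\<rho> (inv \<alpha> (\<beta> (comp GR i (fst y))))
                                   (\<phi> (inv \<psi> (comp GM j (snd x))))) n)))"

end

theory Submission
  imports Defs "HOL-Computational_Algebra.Polynomial"
begin

text \<open>
  A polynomial \<open>p(\<lambda>)\<close> with coefficients in a \<open>\<complex>[\<partial>]\<close>-module \<open>V\<close> can be evaluated at
  \<open>\<lambda> := h(\<partial>)\<close> for every \<open>h \<in> \<complex>[x]\<close>, and it is determined by its values at the constants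
  \<open>\<lambda> := c\<close>.  The substitution \<open>\<lambda> \<mapsto> -\<lambda>-\<partial>\<close> becomes evaluation at \<open>-h-\<partial>\<close>, and
  sesquilinearity turns \<open>\<rho>(a)\<^sub>\<lambda> (g(\<partial>) v)\<close> into \<open>g(\<partial>+\<lambda>) \<rho>(a)\<^sub>\<lambda> v\<close>.  Hence every identity
  containing substituted variables can be checked after evaluating all variables at constants,
  where it becomes an identity between ordinary evaluations.

  The \<open>R\<close>-components of the axioms for \<open>R \<oplus> M\<close> are the axioms of \<open>R\<close>.  The \<open>M\<close>-component of
  skew-symmetry holds because \<open>\<lambda> \<mapsto> -\<lambda>-\<partial>\<close> is an involution, and the \<open>M\<close>-component of the
  Jacobi identity splits into the parts linear in \<open>m\<^sub>3\<close>, \<open>m\<^sub>2\<close> and \<open>m\<^sub>1\<close>: the module axiom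
  itself, and the module axiom after replacing \<open>\<mu>\<close>, respectively \<open>\<lambda>\<close>, by \<open>-\<lambda>-\<mu>-\<partial>\<close>.
\<close>

lemma linearD:
  assumes "Vector_Spaces.linear s1 s2 f"
  shows "f (x + y) = f x + f y" "f (s1 c x) = s2 c (f x)" "f 0 = 0" "f (- x) = - f x"
    "f (x - y) = f x - f y" "f (sum g A) = (\<Sum>a\<in>A. f (g a))"
  using assms unfolding Vector_Spaces.linear_iff_module_hom
  by (auto simp: module_hom.add module_hom.scale module_hom.zero module_hom.neg module_hom.diff
      module_hom.sum)

lemma sum_antidiagonals_eq_sum_square:
  fixes f :: "nat \<Rightarrow> nat \<Rightarrow> 'a::comm_monoid_add"
  assumes "\<And>i j. f i j \<noteq> 0 \<Longrightarrow> i + j \<le> M \<and> i \<le> N \<and> j \<le> N"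
  shows "(\<Sum>k\<le>M. \<Sum>i\<le>k. f i (k - i)) = (\<Sum>i\<le>N. \<Sum>j\<le>N. f i j)"
proof -
  let ?A = "{(i,j). i + j \<le> M}" and ?B = "{..N} \<times> {..N}"
  have "finite ?A" by (rule finite_subset[of _ "{..M} \<times> {..M}"]) auto
  have "(\<Sum>k\<le>M. \<Sum>i\<le>k. f i (k - i)) = (\<Sum>(i,j)\<in>?A. f i j)"
    by (rule sum.triangle_reindex_eq[symmetric])
  also have "\<dots> = (\<Sum>(i,j)\<in>?A \<inter> ?B. f i j)"
    by (rule sum.mono_neutral_right) (use \<open>finite ?A\<close> assms in auto)
  also have "\<dots> = (\<Sum>(i,j)\<in>?B. f i j)"
    by (rule sum.mono_neutral_left) (use assms in auto)
  also have "\<dots> = (\<Sum>i\<le>N. \<Sum>j\<le>N. f i j)"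
    by (rule sum.cartesian_product[symmetric])
  finally show ?thesis .
qed

lemma pcompose_power_left: "pcompose (p ^ n) q = (pcompose p q) ^ n"
  by (induction n) (simp_all add: pcompose_mult pcompose_1)

lemma psign_commute: "psign i j = psign j i"
  by (auto simp: psign_def)

lemma psign_square: "psign i j * psign i j = 1"
  by (auto simp: psign_def)

section \<open>Finitely supported coefficient sequences\<close>

definition vanishes_above :: "nat \<Rightarrow> (nat \<Rightarrow> 'v::zero) \<Rightarrow> bool" where
  "vanishes_above N p \<longleftrightarrow> (\<forall>n>N. p n = 0)"

lemma vanishes_above_support: "vanishes_above N p \<Longrightarrow> {n. p n \<noteq> 0} \<subseteq> {..N}"
  by (auto simp: vanishes_above_def not_less[symmetric])

lemma lpoly_iff_vanishes_above: "lpoly p \<longleftrightarrow> (\<exists>N. vanishes_above N p)"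
proof
  assume "lpoly p"
  then have "finite {n. p n \<noteq> 0}" by (simp add: lpoly_def)
  then have "vanishes_above (Max (insert 0 {n. p n \<noteq> 0})) p"
    unfolding vanishes_above_def by (metis (mono_tags, lifting) Max_ge finite_insert insertCI leD mem_Collect_eq)
  then show "\<exists>N. vanishes_above N p" ..
next
  assume "\<exists>N. vanishes_above N p"
  then obtain N where "vanishes_above N p" ..
  then show "lpoly p"
    unfolding lpoly_def by (rule finite_subset[OF vanishes_above_support]) simp
qed

lemma vanishes_above_mono: "vanishes_above N p \<Longrightarrow> N \<le> M \<Longrightarrow> vanishes_above M p"
  by (auto simp: vanishes_above_def)

lemma lpoly_common_bound:
  assumes "lpoly p" "lpoly q"
  obtains N where "vanishes_above N p" "vanishes_above N q"
proof -
  obtain N M where "vanishes_above N p" "vanishes_above M q"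
    using assms lpoly_iff_vanishes_above by metis
  then show thesis by (meson that max.cobounded1 max.cobounded2 vanishes_above_mono)
qed

lemma vanishes_above_lshift: "vanishes_above N p \<Longrightarrow> vanishes_above (Suc N) (lshift p)"
  by (auto simp: vanishes_above_def lshift_def)

lemma lpoly_map: "f 0 = 0 \<Longrightarrow> lpoly p \<Longrightarrow> lpoly (\<lambda>n. f (p n))"
  unfolding lpoly_def by (rule finite_subset[of _ "{n. p n \<noteq> 0}"]) auto

lemma lpoly_add: "lpoly (p :: nat \<Rightarrow> 'v::ab_group_add) \<Longrightarrow> lpoly q \<Longrightarrow> lpoly (\<lambda>n. p n + q n)"
  unfolding lpoly_def by (rule finite_subset[of _ "{n. p n \<noteq> 0} \<union> {n. q n \<noteq> 0}"]) auto

lemma lpoly_diff: "lpoly (p :: nat \<Rightarrow> 'v::ab_group_add) \<Longrightarrow> lpoly q \<Longrightarrow> lpoly (\<lambda>n. p n - q n)"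
  unfolding lpoly_def by (rule finite_subset[of _ "{n. p n \<noteq> 0} \<union> {n. q n \<noteq> 0}"]) auto

lemma lpoly_neg: "lpoly (p :: nat \<Rightarrow> 'v::ab_group_add) \<Longrightarrow> lpoly (\<lambda>n. - p n)"
  by (simp add: lpoly_def)

lemma lpoly_sum:
  "(\<And>i. i \<in> A \<Longrightarrow> lpoly (f i :: nat \<Rightarrow> 'v::ab_group_add)) \<Longrightarrow> lpoly (\<lambda>n. \<Sum>i\<in>A. f i n)"
proof (induction A rule: infinite_finite_induct)
  case (insert x F)
  then show ?case using lpoly_add[of "f x" "\<lambda>n. \<Sum>i\<in>F. f i n"] by simp
qed (simp_all add: lpoly_def)

lemma lpoly_lshift: "lpoly p \<Longrightarrow> lpoly (lshift p)"
  using lpoly_iff_vanishes_above vanishes_above_lshift by metis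

definition vanishes_above2 :: "nat \<Rightarrow> (nat \<Rightarrow> nat \<Rightarrow> 'v::zero) \<Rightarrow> bool" where
  "vanishes_above2 N F \<longleftrightarrow> (\<forall>p q. N < p \<or> N < q \<longrightarrow> F p q = 0)"

lemma vanishes_above2_add:
  "vanishes_above2 N F \<Longrightarrow> vanishes_above2 M G \<Longrightarrow>
    vanishes_above2 (max N M) (\<lambda>p q. F p q + (G p q :: 'v::monoid_add))"
  unfolding vanishes_above2_def by auto

lemma vanishes_above2_diff:
  "vanishes_above2 N F \<Longrightarrow> vanishes_above2 M G \<Longrightarrow>
    vanishes_above2 (max N M) (\<lambda>p q. F p q - (G p q :: 'v::group_add))"
  unfolding vanishes_above2_def by auto

lemma vanishes_above2_map: "f 0 = 0 \<Longrightarrow> vanishes_above2 N F \<Longrightarrow> vanishes_above2 N (\<lambda>p q. f (F p q))"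
  unfolding vanishes_above2_def by auto

lemma vanishes_above2_swap: "vanishes_above2 N F \<Longrightarrow> vanishes_above2 N (\<lambda>p q. F q p)"
  unfolding vanishes_above2_def by blast

lemma vanishes_above2_row: "vanishes_above2 N F \<Longrightarrow> vanishes_above N (\<lambda>p. F p q)"
  by (simp add: vanishes_above_def vanishes_above2_def)

lemma vanishes_above2_column: "vanishes_above2 N F \<Longrightarrow> vanishes_above N (F p)"
  by (simp add: vanishes_above_def vanishes_above2_def)

lemma lpoly_row: "vanishes_above2 N F \<Longrightarrow> lpoly (\<lambda>p. F p q)"
  using lpoly_iff_vanishes_above vanishes_above2_row by blast

lemma ex_vanishes_above2:
  assumes "\<And>p q. N < q \<Longrightarrow> F p q = (0::'v::zero)" and "\<And>q. lpoly (\<lambda>p. F p q)"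
  shows "\<exists>N'. vanishes_above2 N' F"
proof -
  have "\<forall>q. \<exists>B. vanishes_above B (\<lambda>p. F p q)"
    using assms(2) lpoly_iff_vanishes_above by blast
  then obtain B where B: "\<And>q. vanishes_above (B q) (\<lambda>p. F p q)" by metis
  define N' where "N' = max N (Max (B ` {..N}))"
  have "F p q = 0" if "N' < p \<or> N' < q" for p q
  proof (cases "N < q")
    case False
    then have "B q \<le> Max (B ` {..N})" by (intro Max_ge) auto
    then have "B q \<le> N'" unfolding N'_def by linarith
    moreover have "N' < p" using that False N'_def by auto
    ultimately show ?thesis using B[of q] unfolding vanishes_above_def by auto
  qed (use assms(1) in auto)
  then show ?thesis unfolding vanishes_above2_def by blast
qed

lemma ex_vanishes_above2':
  assumes "\<And>p q. N < p \<Longrightarrow> F p q = (0::'v::zero)" and "\<And>p. lpoly (F p)"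
  shows "\<exists>N'. vanishes_above2 N' F"
proof -
  obtain N' where "vanishes_above2 N' (\<lambda>q p. F p q)"
    using ex_vanishes_above2[of N "\<lambda>q p. F p q"] assms by blast
  then have "vanishes_above2 N' F" unfolding vanishes_above2_def by blast
  then show ?thesis ..
qed

lemma ex_vanishes_above2_compose:
  assumes "lpoly P" "\<And>q. \<Phi> 0 q = (0::'v::zero)" "\<And>v. lpoly (\<Phi> v)"
  shows "\<exists>N. vanishes_above2 N (\<lambda>p q. \<Phi> (P p) q)"
proof -
  obtain N where "vanishes_above N P" using assms(1) lpoly_iff_vanishes_above by blast
  then show ?thesis
    by (intro ex_vanishes_above2'[of N]) (simp_all add: vanishes_above_def assms(2,3))
qed

section \<open>Operator polynomials on a \<open>\<complex>[\<partial>]\<close>-module\<close>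

text \<open>\<open>poly_act s d g v = g(\<partial>) v\<close> and \<open>eval_at s d p h = p(h(\<partial>))\<close>.\<close>

definition poly_act :: "(complex \<Rightarrow> 'v \<Rightarrow> 'v) \<Rightarrow> ('v \<Rightarrow> 'v) \<Rightarrow> complex poly \<Rightarrow> 'v \<Rightarrow> 'v::ab_group_add"
  where "poly_act s d g v = (\<Sum>k\<le>degree g. s (coeff g k) ((d^^k) v))"

definition eval_at ::
  "(complex \<Rightarrow> 'v \<Rightarrow> 'v) \<Rightarrow> ('v \<Rightarrow> 'v) \<Rightarrow> (nat \<Rightarrow> 'v) \<Rightarrow> complex poly \<Rightarrow> 'v::ab_group_add"
  where "eval_at s d p h = (\<Sum>n\<in>{n. p n \<noteq> 0}. poly_act s d (h ^ n) (p n))"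

locale dmodule =
  fixes s :: "complex \<Rightarrow> 'v::ab_group_add \<Rightarrow> 'v" and d :: "'v \<Rightarrow> 'v"
  assumes vector_space: "vector_space s" and linear_d: "Vector_Spaces.linear s s d"
begin

sublocale V: vector_space s by (rule vector_space)

abbreviation "act \<equiv> poly_act s d"
abbreviation "ev \<equiv> eval_at s d"
abbreviation "sn \<equiv> subst_neg s d"

lemma linear_d_power: "Vector_Spaces.linear s s (d^^k)"
proof (induction k)
  case 0
  then show ?case using V.linear_id by (simp add: id_def)
next
  case (Suc k)
  then show ?case
    using Vector_Spaces.linear_compose[OF Suc linear_d] by (simp add: funpow_Suc_right[symmetric] o_def)
qed

lemmas d_scale = linearD(2)[OF linear_d]
  and d_zero = linearD(3)[OF linear_d] and d_neg = linearD(4)[OF linear_d]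
  and d_diff = linearD(5)[OF linear_d] and d_sum = linearD(6)[OF linear_d]
lemmas d_power_add = linearD(1)[OF linear_d_power] and d_power_scale = linearD(2)[OF linear_d_power]
  and d_power_zero = linearD(3)[OF linear_d_power]

lemma funpow_commute:
  assumes "\<And>x. f (d x) = d (f x)"
  shows "f ((d^^k) x) = (d^^k) (f x)"
  by (induction k) (simp_all add: assms)

lemma poly_act_eq_sum_atMost: "degree g \<le> N \<Longrightarrow> act g v = (\<Sum>k\<le>N. s (coeff g k) ((d^^k) v))"
  unfolding poly_act_def by (rule sum.mono_neutral_left) (auto simp: coeff_eq_0)

lemma linear_poly_act: "Vector_Spaces.linear s s (act g)"
  unfolding Vector_Spaces.linear_iff
  by (auto simp: vector_space poly_act_def d_power_add d_power_scale V.scale_right_distrib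
      sum.distrib V.scale_sum_right V.scale_scale mult.commute)

lemmas poly_act_add = linearD(1)[OF linear_poly_act] and poly_act_scale = linearD(2)[OF linear_poly_act]
  and poly_act_zero = linearD(3)[OF linear_poly_act] and poly_act_sum = linearD(6)[OF linear_poly_act]

lemma poly_act_add_poly: "act (g + h) v = act g v + act h v"
proof -
  let ?N = "max (degree g) (degree h)"
  have "act (g + h) v = (\<Sum>k\<le>?N. s (coeff (g + h) k) ((d^^k) v))"
    by (rule poly_act_eq_sum_atMost) (simp add: degree_add_le)
  also have "\<dots> = (\<Sum>k\<le>?N. s (coeff g k) ((d^^k) v)) + (\<Sum>k\<le>?N. s (coeff h k) ((d^^k) v))"
    by (simp add: V.scale_left_distrib sum.distrib)
  also have "\<dots> = act g v + act h v"
    by (simp add: poly_act_eq_sum_atMost[of g ?N v, symmetric] poly_act_eq_sum_atMost[of h ?N v, symmetric])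
  finally show ?thesis .
qed

lemma poly_act_smult: "act (smult c g) v = s c (act g v)"
proof -
  have "act (smult c g) v = (\<Sum>k\<le>degree g. s (coeff (smult c g) k) ((d^^k) v))"
    by (rule poly_act_eq_sum_atMost) simp
  then show ?thesis by (simp add: poly_act_def V.scale_sum_right)
qed

lemma poly_act_const: "act [:c:] v = s c v"
  by (simp add: poly_act_def)

lemma poly_act_0: "act 0 v = 0"
  by (simp add: poly_act_def)

lemma poly_act_1: "act 1 v = v"
  by (simp add: poly_act_def)

lemma poly_act_pCons: "act (pCons a g) v = s a v + d (act g v)"
proof -
  have "act (pCons a g) v = (\<Sum>k\<le>Suc (degree g). s (coeff (pCons a g) k) ((d^^k) v))"
    by (rule poly_act_eq_sum_atMost) (simp add: degree_pCons_le)
  also have "\<dots> = s a v + (\<Sum>k\<le>degree g. s (coeff g k) ((d^^(Suc k)) v))"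
    by (subst sum.atMost_Suc_shift) simp
  also have "\<dots> = s a v + d (act g v)"
    by (simp add: poly_act_def d_sum d_scale)
  finally show ?thesis .
qed

lemma poly_act_X: "act [:0, 1:] v = d v"
  by (simp add: poly_act_pCons poly_act_const poly_act_0 d_zero)

lemma poly_act_mult: "act (g * h) v = act g (act h v)"
proof (induction g)
  case 0
  then show ?case by (simp add: poly_act_0)
next
  case (pCons a g)
  have "act (pCons a g * h) v = s a (act h v) + d (act (g * h) v)"
    by (simp add: poly_act_add_poly poly_act_smult poly_act_pCons poly_act_0)
  then show ?case using pCons by (simp add: poly_act_pCons)
qed

lemma poly_act_minus_poly: "act (- g) v = - act g v"
  using poly_act_smult[of "-1" g v] by simp

lemma poly_act_diff_poly: "act (g - h) v = act g v - act h v"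
  using poly_act_add_poly[of g "-h" v] by (simp add: poly_act_minus_poly)

lemma poly_act_sum_poly: "act (\<Sum>i\<in>A. f i) v = (\<Sum>i\<in>A. act (f i) v)"
  by (induction A rule: infinite_finite_induct) (simp_all add: poly_act_0 poly_act_add_poly)

lemma poly_act_d: "act g (d v) = d (act g v)"
  using poly_act_mult[of g "[:0, 1:]" v] poly_act_mult[of "[:0, 1:]" g v]
  by (simp add: poly_act_X mult.commute)

lemma poly_act_X_power: "act ([:0, 1:] ^ k) v = (d^^k) v"
proof (induction k)
  case (Suc k)
  have "act ([:0, 1:] ^ Suc k) v = act [:0, 1:] (act ([:0, 1:] ^ k) v)"
    by (simp only: power_Suc poly_act_mult)
  then show ?case using Suc by (simp add: poly_act_X)
qed (simp add: poly_act_1)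

lemma poly_act_const_power: "act ([:c:] ^ n) v = s (c ^ n) v"
  by (simp add: poly_const_pow poly_act_const)

lemma poly_act_binomial:
  "act ((h + [:c:]) ^ k) v = (\<Sum>q\<le>k. s (of_nat (k choose q) * c ^ (k - q)) (act (h ^ q) v))"
  by (simp add: binomial_ring poly_act_sum_poly of_nat_poly poly_const_pow poly_act_smult
      mult.commute[of _ "[:_:]"] mult.commute[of "c ^ _"])

lemma eval_at_eq_sum_atMost: "vanishes_above N p \<Longrightarrow> ev p h = (\<Sum>n\<le>N. act (h ^ n) (p n))"
  unfolding eval_at_def
  by (rule sum.mono_neutral_left) (auto simp: poly_act_zero dest: vanishes_above_support)

lemma eval_at_const: "vanishes_above N p \<Longrightarrow> ev p [:c:] = (\<Sum>n\<le>N. s (c ^ n) (p n))"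
  by (simp add: eval_at_eq_sum_atMost poly_act_const_power)

lemma eval_at_zero: "ev (\<lambda>n. 0) h = 0"
  by (simp add: eval_at_def)

lemma eval_at_add: "lpoly p \<Longrightarrow> lpoly q \<Longrightarrow> ev (\<lambda>n. p n + q n) h = ev p h + ev q h"
proof -
  assume "lpoly p" "lpoly q"
  then obtain N where N: "vanishes_above N p" "vanishes_above N q" by (rule lpoly_common_bound)
  then have "vanishes_above N (\<lambda>n. p n + q n)" by (simp add: vanishes_above_def)
  then show ?thesis using N by (simp add: eval_at_eq_sum_atMost poly_act_add sum.distrib)
qed

lemma eval_at_scale: "lpoly p \<Longrightarrow> ev (\<lambda>n. s c (p n)) h = s c (ev p h)"
proof -
  assume "lpoly p"
  then obtain N where N: "vanishes_above N p" using lpoly_iff_vanishes_above by blast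
  then have "vanishes_above N (\<lambda>n. s c (p n))" by (simp add: vanishes_above_def)
  then show ?thesis using N by (simp add: eval_at_eq_sum_atMost poly_act_scale V.scale_sum_right)
qed

lemma eval_at_neg: "lpoly p \<Longrightarrow> ev (\<lambda>n. - p n) h = - ev p h"
  using eval_at_scale[of p "-1" h] by simp

lemma eval_at_diff: "lpoly p \<Longrightarrow> lpoly q \<Longrightarrow> ev (\<lambda>n. p n - q n) h = ev p h - ev q h"
  using eval_at_add[of p "\<lambda>n. - q n" h] eval_at_neg[of q h] lpoly_neg[of q] by simp

lemma eval_at_sum:
  "(\<And>i. i \<in> A \<Longrightarrow> lpoly (f i)) \<Longrightarrow> ev (\<lambda>n. \<Sum>i\<in>A. f i n) h = (\<Sum>i\<in>A. ev (f i) h)"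
proof (induction A rule: infinite_finite_induct)
  case (insert x F)
  then show ?case using eval_at_add[of "f x" "\<lambda>n. \<Sum>i\<in>F. f i n" h] lpoly_sum[of F f] by simp
qed (simp_all add: eval_at_zero)

lemma eval_at_lshift: "lpoly p \<Longrightarrow> ev (lshift p) h = act h (ev p h)"
proof -
  assume "lpoly p"
  then obtain N where N: "vanishes_above N p" using lpoly_iff_vanishes_above by blast
  have "ev (lshift p) h = (\<Sum>n\<le>Suc N. act (h ^ n) (lshift p n))"
    by (rule eval_at_eq_sum_atMost[OF vanishes_above_lshift[OF N]])
  also have "\<dots> = (\<Sum>n\<le>N. act (h ^ Suc n) (p n))"
    by (subst sum.atMost_Suc_shift) (simp add: lshift_def poly_act_zero)
  also have "\<dots> = act h (ev p h)"
    using N by (simp add: eval_at_eq_sum_atMost poly_act_sum poly_act_mult)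
  finally show ?thesis .
qed

lemma eval_at_d: "lpoly p \<Longrightarrow> ev (\<lambda>n. d (p n)) h = d (ev p h)"
proof -
  assume "lpoly p"
  then obtain N where N: "vanishes_above N p" using lpoly_iff_vanishes_above by blast
  then have "vanishes_above N (\<lambda>n. d (p n))" by (simp add: vanishes_above_def d_zero)
  then show ?thesis using N by (simp add: eval_at_eq_sum_atMost poly_act_d d_sum)
qed

lemma subst_neg_eq_sum_atMost:
  "vanishes_above N p \<Longrightarrow> sn p k = (\<Sum>n\<le>N. s ((-1) ^ n * of_nat (n choose k)) ((d^^(n - k)) (p n)))"
  unfolding subst_neg_def
  by (rule sum.mono_neutral_left) (auto simp: d_power_zero dest: vanishes_above_support)

lemma vanishes_above_subst_neg: "vanishes_above N p \<Longrightarrow> vanishes_above N (sn p)"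
  by (auto simp: vanishes_above_def subst_neg_eq_sum_atMost[of N p] intro!: sum.neutral)

lemma lpoly_subst_neg: "lpoly p \<Longrightarrow> lpoly (sn p)"
  using lpoly_iff_vanishes_above vanishes_above_subst_neg by blast

lemma subst_neg_zero: "sn (\<lambda>n. 0) k = 0"
  by (simp add: subst_neg_def)

lemma subst_neg_add: "lpoly p \<Longrightarrow> lpoly q \<Longrightarrow> sn (\<lambda>n. p n + q n) k = sn p k + sn q k"
proof -
  assume "lpoly p" "lpoly q"
  then obtain N where N: "vanishes_above N p" "vanishes_above N q" by (rule lpoly_common_bound)
  then have "vanishes_above N (\<lambda>n. p n + q n)" by (simp add: vanishes_above_def)
  then show ?thesis
    using N by (simp add: subst_neg_eq_sum_atMost d_power_add sum.distrib V.scale_right_distrib)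
qed

lemma subst_neg_scale: "lpoly p \<Longrightarrow> sn (\<lambda>n. s c (p n)) k = s c (sn p k)"
proof -
  assume "lpoly p"
  then obtain N where N: "vanishes_above N p" using lpoly_iff_vanishes_above by blast
  then have "vanishes_above N (\<lambda>n. s c (p n))" by (simp add: vanishes_above_def)
  then show ?thesis
    using N by (simp add: subst_neg_eq_sum_atMost d_power_scale V.scale_sum_right mult.commute)
qed

lemma subst_neg_diff: "lpoly p \<Longrightarrow> lpoly q \<Longrightarrow> sn (\<lambda>n. p n - q n) k = sn p k - sn q k"
  using subst_neg_add[of p "\<lambda>n. - q n" k] subst_neg_scale[of q "-1" k] lpoly_neg[of q] by simp

lemma subst_neg_commute:
  assumes "Vector_Spaces.linear s s f" "\<And>x. f (d x) = d (f x)" "lpoly p"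
  shows "f (sn p k) = sn (\<lambda>n. f (p n)) k"
proof -
  obtain N where N: "vanishes_above N p" using assms(3) lpoly_iff_vanishes_above by blast
  moreover have "vanishes_above N (\<lambda>n. f (p n))"
    using N by (simp add: vanishes_above_def linearD(3)[OF assms(1)])
  ultimately show ?thesis
    by (simp add: subst_neg_eq_sum_atMost linearD(6)[OF assms(1)] linearD(2)[OF assms(1)]
        funpow_commute assms(2))
qed

lemma neg_minus_X_power_expand:
  fixes h :: "complex poly"
  assumes "n \<le> N"
  shows "(- h - [:0, 1:]) ^ n = (\<Sum>k\<le>N. smult ((-1) ^ n * of_nat (n choose k)) (h ^ k * [:0, 1:] ^ (n - k)))"
proof -
  have sign: "(-1) ^ n * q = smult ((-1) ^ n) q" for q :: "complex poly"
    by (induction n) simp_all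
  have "(- h - [:0, 1:]) ^ n = (-1) ^ n * (h + [:0, 1:]) ^ n"
    by (metis minus_add_distrib power_minus diff_conv_add_uminus)
  also have "\<dots> = (\<Sum>k\<le>n. smult ((-1) ^ n * of_nat (n choose k)) (h ^ k * [:0, 1:] ^ (n - k)))"
    by (simp add: binomial_ring sum_distrib_left sign of_nat_poly mult.assoc flip: smult_smult)
      (simp add: mult.commute)
  also have "\<dots> = (\<Sum>k\<le>N. smult ((-1) ^ n * of_nat (n choose k)) (h ^ k * [:0, 1:] ^ (n - k)))"
    by (rule sum.mono_neutral_left) (use assms in auto)
  finally show ?thesis .
qed

lemma eval_at_subst_neg: "lpoly p \<Longrightarrow> ev (sn p) h = ev p (- h - [:0, 1:])"
proof -
  assume "lpoly p"
  then obtain N where N: "vanishes_above N p" using lpoly_iff_vanishes_above by blast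
  let ?t = "\<lambda>n k. smult ((-1) ^ n * of_nat (n choose k)) (h ^ k * [:0, 1:] ^ (n - k))"
  have "ev (sn p) h = (\<Sum>k\<le>N. act (h ^ k) (sn p k))"
    by (rule eval_at_eq_sum_atMost[OF vanishes_above_subst_neg[OF N]])
  also have "\<dots> = (\<Sum>k\<le>N. \<Sum>n\<le>N. act (?t n k) (p n))"
    by (simp add: subst_neg_eq_sum_atMost[OF N] poly_act_sum poly_act_mult poly_act_smult
        poly_act_X_power poly_act_scale)
  also have "\<dots> = (\<Sum>n\<le>N. act (\<Sum>k\<le>N. ?t n k) (p n))"
    by (subst sum.swap) (simp add: poly_act_sum_poly)
  also have "\<dots> = (\<Sum>n\<le>N. act ((- h - [:0, 1:]) ^ n) (p n))"
    by (intro sum.cong refl) (simp add: neg_minus_X_power_expand)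
  also have "\<dots> = ev p (- h - [:0, 1:])"
    using N by (simp add: eval_at_eq_sum_atMost)
  finally show ?thesis .
qed

lemma sum_powers_diff_factor:
  "(\<Sum>n\<le>Suc N. s (c ^ n) (p n)) - (\<Sum>n\<le>Suc N. s (a ^ n) (p n))
     = s (c - a) (\<Sum>k\<le>N. s (c ^ k) (\<Sum>i\<in>{Suc k..Suc N}. s (a ^ (i - Suc k)) (p i)))"
proof -
  have "(\<Sum>n\<le>Suc N. s (c ^ n) (p n)) - (\<Sum>n\<le>Suc N. s (a ^ n) (p n))
      = (\<Sum>n\<le>Suc N. s (c ^ n - a ^ n) (p n))"
    by (simp add: sum_subtractf V.scale_left_diff_distrib)
  also have "\<dots> = (\<Sum>n\<le>Suc N. s ((c - a) * (\<Sum>i<n. a ^ (n - Suc i) * c ^ i)) (p n))"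
    by (simp only: power_diff_sumr2)
  also have "\<dots> = s (c - a) (\<Sum>n\<le>Suc N. \<Sum>i<n. s (a ^ (n - Suc i) * c ^ i) (p n))"
    by (simp only: V.scale_scale[symmetric] V.scale_sum_left V.scale_sum_right)
  also have "(\<Sum>n\<le>Suc N. \<Sum>i<n. s (a ^ (n - Suc i) * c ^ i) (p n))
      = (\<Sum>i<Suc N. \<Sum>n\<in>{Suc i..Suc N}. s (a ^ (n - Suc i) * c ^ i) (p n))"
    by (rule sum.nested_swap')
  also have "\<dots> = (\<Sum>k\<le>N. s (c ^ k) (\<Sum>i\<in>{Suc k..Suc N}. s (a ^ (i - Suc k)) (p i)))"
    by (simp add: lessThan_Suc_atMost V.scale_sum_right V.scale_right_distrib mult.commute)
  finally show ?thesis .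
qed

lemma coeff_zero_if_vanishing_on_infinite:
  assumes "vanishes_above N p" and "infinite A" and "\<And>c. c \<in> A \<Longrightarrow> (\<Sum>n\<le>N. s (c ^ n) (p n)) = 0"
  shows "p m = 0"
  using assms
proof (induction N arbitrary: p A m)
  case 0
  then obtain c where "c \<in> A" by (metis finite.emptyI ex_in_conv)
  then have "p 0 = 0" using 0(3) by simp
  then show ?case using 0(1) unfolding vanishes_above_def by (cases m) auto
next
  case (Suc N)
  obtain a where a: "a \<in> A" using Suc(3) by (metis finite.emptyI ex_in_conv)
  define g where "g k = (\<Sum>i\<in>{Suc k..Suc N}. s (a ^ (i - Suc k)) (p i))" for k
  have "(\<Sum>k\<le>N. s (c ^ k) (g k)) = 0" if "c \<in> A - {a}" for c
    using sum_powers_diff_factor[where c=c and p=p and a=a and N=N] Suc(4) a that unfolding g_def by auto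
  then have g: "g k = 0" for k
    using Suc.IH[of g "A - {a}"] Suc(3) unfolding vanishes_above_def g_def by auto
  have "p (Suc k) = g k - s a (g (Suc k))" for k
  proof (cases "k \<le> N")
    case True
    have "g k = p (Suc k) + (\<Sum>i\<in>{Suc (Suc k)..Suc N}. s (a ^ (i - Suc k)) (p i))"
      unfolding g_def using True by (subst sum.atLeast_Suc_atMost) simp_all
    also have "(\<Sum>i\<in>{Suc (Suc k)..Suc N}. s (a ^ (i - Suc k)) (p i)) = s a (g (Suc k))"
      unfolding g_def V.scale_sum_right
      by (intro sum.cong refl) (simp add: Suc_diff_Suc[symmetric] del: Suc_diff_Suc)
    finally show ?thesis by simp
  next
    case False
    then show ?thesis using Suc(2) by (simp add: g_def vanishes_above_def)
  qed
  then have p_Suc: "p (Suc k) = 0" for k by (simp add: g)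
  have "p 0 = 0"
    using Suc(4)[OF a] by (subst (asm) sum.atMost_Suc_shift) (simp add: p_Suc)
  then show ?case using p_Suc by (cases m) auto
qed

lemma lpoly_eqI_eval_const:
  assumes "lpoly p" "lpoly q" "\<And>c. ev p [:c:] = ev q [:c:]"
  shows "p = q"
proof
  fix m
  obtain N where N: "vanishes_above N (\<lambda>n. p n - q n)"
    using lpoly_diff[OF assms(1,2)] lpoly_iff_vanishes_above by blast
  have "ev (\<lambda>n. p n - q n) [:c:] = 0" for c
    by (simp add: eval_at_diff assms)
  then have "p m - q m = 0"
    using coeff_zero_if_vanishing_on_infinite[OF N infinite_UNIV_char_0, of m]
    by (simp add: eval_at_const[OF N])
  then show "p m = q m" by simp
qed

lemma subst_neg_involutive: "lpoly p \<Longrightarrow> sn (sn p) = p"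
  by (rule lpoly_eqI_eval_const) (simp_all add: lpoly_subst_neg eval_at_subst_neg)

lemma subst_neg_d_plus_lshift:
  assumes p: "lpoly p"
  shows "sn (\<lambda>k. d (p k) + lshift p k) = (\<lambda>k. - lshift (sn p) k)"
proof (rule lpoly_eqI_eval_const)
  have dp: "lpoly (\<lambda>k. d (p k))" by (rule lpoly_map[where f = d, OF d_zero p])
  show "lpoly (sn (\<lambda>k. d (p k) + lshift p k))" by (intro lpoly_subst_neg lpoly_add dp lpoly_lshift p)
  show "lpoly (\<lambda>k. - lshift (sn p) k)" by (intro lpoly_neg lpoly_lshift lpoly_subst_neg p)
  show "ev (sn (\<lambda>k. d (p k) + lshift p k)) [:c:] = ev (\<lambda>k. - lshift (sn p) k) [:c:]" for c
    using p dp
    by (simp add: eval_at_subst_neg lpoly_add lpoly_lshift eval_at_add eval_at_d eval_at_lshift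
        eval_at_neg lpoly_subst_neg poly_act_diff_poly poly_act_minus_poly poly_act_const poly_act_X poly_act_pCons poly_act_0
        d_scale d_zero d_diff d_neg)
qed

lemma subst_neg_neg_lshift:
  assumes p: "lpoly p"
  shows "sn (\<lambda>k. - lshift p k) = (\<lambda>k. d (sn p k) + lshift (sn p) k)"
proof (rule lpoly_eqI_eval_const)
  have dp: "lpoly (\<lambda>k. d (sn p k))" by (rule lpoly_map[where f = d, OF d_zero lpoly_subst_neg[OF p]])
  show "lpoly (sn (\<lambda>k. - lshift p k))" by (intro lpoly_subst_neg lpoly_neg lpoly_lshift p)
  show "lpoly (\<lambda>k. d (sn p k) + lshift (sn p) k)" by (intro lpoly_add dp lpoly_lshift lpoly_subst_neg p)
  show "ev (sn (\<lambda>k. - lshift p k)) [:c:] = ev (\<lambda>k. d (sn p k) + lshift (sn p) k) [:c:]" for c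
    using p dp
    by (simp add: eval_at_subst_neg lpoly_neg lpoly_lshift eval_at_add eval_at_d eval_at_lshift
        eval_at_neg lpoly_subst_neg poly_act_diff_poly poly_act_minus_poly poly_act_const poly_act_X poly_act_pCons poly_act_0
        d_scale d_zero d_diff d_neg)
qed

text \<open>Sesquilinearity \<open>F(\<partial> v) = (\<partial> + \<lambda>) F v\<close> lets operator polynomials pass through \<open>F\<close>.\<close>

lemma eval_at_poly_act_sesqui:
  assumes F_add: "\<And>v w n. F (v + w) n = F v n + F w n"
    and F_scale: "\<And>c v n. F (s c v) n = s c (F v n)"
    and F_lpoly: "\<And>v. lpoly (F v)"
    and F_d: "\<And>v n. F (d v) n = d (F v n) + lshift (F v) n"
  shows "ev (F (act g v)) h = act (pcompose g ([:0, 1:] + h)) (ev (F v) h)"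
proof (induction g)
  case 0
  have "F 0 = (\<lambda>n. 0)" using F_scale[of 0 0] by (auto simp: fun_eq_iff)
  then show ?case by (simp add: poly_act_0 eval_at_zero)
next
  case (pCons a g)
  let ?w = "act g v"
  have "F (act (pCons a g) v) = (\<lambda>n. s a (F v n) + (d (F ?w n) + lshift (F ?w) n))"
    by (simp add: poly_act_pCons F_add F_scale F_d fun_eq_iff)
  then have "ev (F (act (pCons a g) v)) h = s a (ev (F v) h) + (d (ev (F ?w) h) + act h (ev (F ?w) h))"
    by (simp add: eval_at_add eval_at_scale eval_at_d eval_at_lshift F_lpoly lpoly_map lpoly_add
        lpoly_lshift d_zero)
  also have "\<dots> = act (pcompose (pCons a g) ([:0, 1:] + h)) (ev (F v) h)"
    by (simp add: pcompose_pCons poly_act_add_poly poly_act_const poly_act_mult pCons.IH poly_act_X)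
  finally show ?case .
qed

lemma eval_at_eval_at_sesqui:
  assumes F_add: "\<And>v w n. F (v + w) n = F v n + F w n"
    and F_scale: "\<And>c v n. F (s c v) n = s c (F v n)"
    and F_lpoly: "\<And>v. lpoly (F v)"
    and F_d: "\<And>v n. F (d v) n = d (F v n) + lshift (F v) n"
    and p: "lpoly p"
  shows "ev (F (ev p g)) h = ev (\<lambda>n. ev (F (p n)) h) (pcompose g ([:0, 1:] + h))"
proof -
  obtain N where N: "vanishes_above N p" using p lpoly_iff_vanishes_above by blast
  have F0: "F 0 = (\<lambda>n. 0)" using F_scale[of 0 0] by (auto simp: fun_eq_iff)
  have F_sum: "F (\<Sum>i\<in>A. f i) = (\<lambda>n. \<Sum>i\<in>A. F (f i) n)" for A f
    by (induction A rule: infinite_finite_induct) (simp_all add: F0 F_add fun_eq_iff)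
  have "ev (F (ev p g)) h = ev (\<lambda>n. \<Sum>i\<le>N. F (act (g ^ i) (p i)) n) h"
    by (simp add: eval_at_eq_sum_atMost[OF N] F_sum)
  also have "\<dots> = (\<Sum>i\<le>N. ev (F (act (g ^ i) (p i))) h)"
    by (rule eval_at_sum) (simp add: F_lpoly)
  also have "\<dots> = (\<Sum>i\<le>N. act ((pcompose g ([:0, 1:] + h)) ^ i) (ev (F (p i)) h))"
    by (simp add: eval_at_poly_act_sesqui[OF F_add F_scale F_lpoly F_d] pcompose_power_left)
  also have "\<dots> = ev (\<lambda>n. ev (F (p n)) h) (pcompose g ([:0, 1:] + h))"
  proof -
    have "vanishes_above N (\<lambda>n. ev (F (p n)) h)"
      using N by (simp add: vanishes_above_def F0 eval_at_zero)
    then show ?thesis by (simp add: eval_at_eq_sum_atMost)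
  qed
  finally show ?thesis .
qed

lemma at_sum_add: "at_sum s (\<lambda>n k. A n k + B n k) p q = at_sum s A p q + at_sum s B p q"
  by (simp add: at_sum_def sum.distrib V.scale_right_distrib)

lemma at_sum_diff: "at_sum s (\<lambda>n k. A n k - B n k) p q = at_sum s A p q - at_sum s B p q"
  by (simp add: at_sum_def sum_subtractf V.scale_right_diff_distrib)

lemma at_sum_scale: "at_sum s (\<lambda>n k. s c (A n k)) p q = s c (at_sum s A p q)"
  by (simp add: at_sum_def V.scale_sum_right mult.commute)

lemma vanishes_above2_at_sum: "vanishes_above2 N Q \<Longrightarrow> vanishes_above2 (2 * N) (at_sum s Q)"
  unfolding vanishes_above2_def at_sum_def
proof (intro allI impI sum.neutral ballI)
  fix p q n
  assume Q: "\<forall>p q. N < p \<or> N < q \<longrightarrow> Q p q = 0" and "2 * N < p \<or> 2 * N < q" "n \<in> {..p}"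
  then have "N < n \<or> N < p - n + q" by auto
  then show "s (of_nat ((p - n + q) choose q)) (Q n (p - n + q)) = 0" using Q by auto
qed

lemma eval_at_const_at_sum:
  assumes Q: "vanishes_above2 N Q"
  shows "ev (\<lambda>p. at_sum s Q p q) [:c:]
    = (\<Sum>n\<le>N. s (c ^ n) (\<Sum>r\<le>N. s (c ^ r * of_nat ((r + q) choose q)) (Q n (r + q))))"
proof -
  define T where "T n r = s (c ^ (n + r) * of_nat ((r + q) choose q)) (Q n (r + q))" for n r
  have "ev (\<lambda>p. at_sum s Q p q) [:c:]
      = (\<Sum>p\<le>2 * N. s (c ^ p) (\<Sum>n\<le>p. s (of_nat ((p - n + q) choose q)) (Q n (p - n + q))))"
    by (subst eval_at_const[OF vanishes_above2_row[OF vanishes_above2_at_sum[OF Q]]]) (simp only: at_sum_def)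
  also have "\<dots> = (\<Sum>p\<le>2 * N. \<Sum>n\<le>p. T n (p - n))"
    by (simp add: T_def V.scale_sum_right del: of_nat_add)
  also have "\<dots> = (\<Sum>n\<le>N. \<Sum>r\<le>N. T n r)"
  proof (rule sum_antidiagonals_eq_sum_square)
    fix n r
    assume "T n r \<noteq> 0"
    then have "\<not> (N < n \<or> N < r + q)" using Q by (auto simp: T_def vanishes_above2_def)
    then show "n + r \<le> 2 * N \<and> n \<le> N \<and> r \<le> N" by auto
  qed
  finally show ?thesis
    by (simp add: T_def V.scale_sum_right power_add mult.assoc)
qed

lemma eval_at_binomial_shift:
  assumes P: "vanishes_above N P"
  shows "ev (\<lambda>q. \<Sum>r\<le>N. s (c ^ r * of_nat ((r + q) choose q)) (P (r + q))) h = ev P ([:c:] + h)"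
proof -
  define U where "U q r = s (of_nat ((q + r) choose q) * c ^ r) (act (h ^ q) (P (q + r)))" for q r
  have U: "q + r \<le> N \<and> q \<le> N \<and> r \<le> N" if "U q r \<noteq> 0" for q r
  proof -
    have "P (q + r) \<noteq> 0" using that by (auto simp: U_def poly_act_zero)
    then have "\<not> N < q + r" using P by (auto simp: vanishes_above_def)
    then show ?thesis by linarith
  qed
  have "vanishes_above N (\<lambda>q. \<Sum>r\<le>N. s (c ^ r * of_nat ((r + q) choose q)) (P (r + q)))"
    using P by (auto simp: vanishes_above_def intro!: sum.neutral)
  then have "ev (\<lambda>q. \<Sum>r\<le>N. s (c ^ r * of_nat ((r + q) choose q)) (P (r + q))) h
      = (\<Sum>q\<le>N. \<Sum>r\<le>N. U q r)"
    by (simp add: eval_at_eq_sum_atMost U_def poly_act_sum poly_act_scale add.commute mult.commute)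
  also have "\<dots> = (\<Sum>k\<le>N. \<Sum>q\<le>k. U q (k - q))"
    by (rule sum_antidiagonals_eq_sum_square[symmetric]) (rule U)
  also have "\<dots> = (\<Sum>k\<le>N. act ((h + [:c:]) ^ k) (P k))"
    by (simp add: U_def poly_act_binomial)
  also have "\<dots> = ev P ([:c:] + h)"
    using P by (simp add: eval_at_eq_sum_atMost add.commute)
  finally show ?thesis .
qed

lemma eval_at_at_sum:
  assumes Q: "vanishes_above2 N Q"
  shows "ev (\<lambda>q. ev (\<lambda>p. at_sum s Q p q) [:c:]) h = ev (\<lambda>n. ev (Q n) ([:c:] + h)) [:c:]"
proof -
  let ?S = "\<lambda>n q. \<Sum>r\<le>N. s (c ^ r * of_nat ((r + q) choose q)) (Q n (r + q))"
  have "vanishes_above N (?S n)" for n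
    using Q by (auto simp: vanishes_above_def vanishes_above2_def intro!: sum.neutral)
  then have S0: "lpoly (?S n)" for n
    using lpoly_iff_vanishes_above by blast
  have S: "lpoly (\<lambda>q. s (c ^ n) (?S n q))" for n
    by (rule lpoly_map[where f = "s (c ^ n)", OF _ S0]) simp
  have "ev (\<lambda>q. ev (\<lambda>p. at_sum s Q p q) [:c:]) h = ev (\<lambda>q. \<Sum>n\<le>N. s (c ^ n) (?S n q)) h"
    by (simp add: eval_at_const_at_sum[OF Q])
  also have "\<dots> = (\<Sum>n\<le>N. s (c ^ n) (ev (Q n) ([:c:] + h)))"
    by (subst eval_at_sum) (use S in \<open>simp_all add: eval_at_scale S0
        eval_at_binomial_shift[OF vanishes_above2_column[OF Q]]\<close>)
  also have "\<dots> = ev (\<lambda>n. ev (Q n) ([:c:] + h)) [:c:]"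
  proof -
    have "Q n = (\<lambda>k. 0)" if "N < n" for n
      using Q that by (auto simp: vanishes_above2_def)
    then have "vanishes_above N (\<lambda>n. ev (Q n) ([:c:] + h))"
      by (simp add: vanishes_above_def eval_at_zero)
    then show ?thesis by (rule eval_at_const[symmetric])
  qed
  finally show ?thesis .
qed

definition eval2 :: "(nat \<Rightarrow> nat \<Rightarrow> 'v) \<Rightarrow> complex \<Rightarrow> complex \<Rightarrow> 'v" where
  "eval2 F c e = ev (\<lambda>q. ev (\<lambda>p. F p q) [:c:]) [:e:]"

lemma vanishes_above_eval_rows: "vanishes_above2 N F \<Longrightarrow> vanishes_above N (\<lambda>q. ev (\<lambda>p. F p q) h)"
proof -
  assume F: "vanishes_above2 N F"
  have "(\<lambda>p. F p q) = (\<lambda>p. 0)" if "N < q" for q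
    using F that by (auto simp: vanishes_above2_def)
  then show ?thesis by (simp add: vanishes_above_def eval_at_zero)
qed

lemma lpoly_eval_rows: "vanishes_above2 N F \<Longrightarrow> lpoly (\<lambda>q. ev (\<lambda>p. F p q) h)"
  using lpoly_iff_vanishes_above vanishes_above_eval_rows by blast

lemma eval2_add:
  "vanishes_above2 N F \<Longrightarrow> vanishes_above2 M G \<Longrightarrow> eval2 (\<lambda>p q. F p q + G p q) c e = eval2 F c e + eval2 G c e"
  unfolding eval2_def by (simp add: eval_at_add lpoly_row lpoly_eval_rows)

lemma eval2_diff:
  "vanishes_above2 N F \<Longrightarrow> vanishes_above2 M G \<Longrightarrow> eval2 (\<lambda>p q. F p q - G p q) c e = eval2 F c e - eval2 G c e"
  unfolding eval2_def by (simp add: eval_at_diff lpoly_row lpoly_eval_rows)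

lemma eval2_scale: "vanishes_above2 N F \<Longrightarrow> eval2 (\<lambda>p q. s a (F p q)) c e = s a (eval2 F c e)"
  unfolding eval2_def by (simp add: eval_at_scale lpoly_row lpoly_eval_rows)

lemma eval2_swap:
  assumes F: "vanishes_above2 N F"
  shows "eval2 F c e = ev (\<lambda>p. ev (F p) [:e:]) [:c:]"
proof -
  note rows = vanishes_above_eval_rows[OF F, of "[:c:]"]
  note columns = vanishes_above_eval_rows[OF vanishes_above2_swap[OF F], of "[:e:]"]
  have "eval2 F c e = (\<Sum>q\<le>N. \<Sum>p\<le>N. s (e ^ q * c ^ p) (F p q))"
    unfolding eval2_def eval_at_const[OF rows] unfolding eval_at_const[OF vanishes_above2_row[OF F]]
    by (simp add: V.scale_sum_right)
  also have "\<dots> = ev (\<lambda>p. ev (F p) [:e:]) [:c:]"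
    unfolding eval_at_const[OF columns] unfolding eval_at_const[OF vanishes_above2_column[OF F]]
    by (subst sum.swap) (simp add: V.scale_sum_right mult.commute)
  finally show ?thesis .
qed

lemma vanishes_above2_eqI:
  assumes F: "vanishes_above2 N F" and G: "vanishes_above2 M G"
    and eq: "\<And>c e. eval2 F c e = eval2 G c e"
  shows "F p q = G p q"
proof -
  have "(\<lambda>q. ev (\<lambda>p. F p q) [:c:]) = (\<lambda>q. ev (\<lambda>p. G p q) [:c:])" for c
    by (rule lpoly_eqI_eval_const[OF lpoly_eval_rows[OF F] lpoly_eval_rows[OF G]])
      (use eq in \<open>simp add: eval2_def\<close>)
  then have "(\<lambda>p. F p q) = (\<lambda>p. G p q)"
    by (intro lpoly_eqI_eval_const lpoly_row[OF F] lpoly_row[OF G]) metis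
  then show ?thesis by metis
qed

lemma eval_at_const_linear:
  assumes "Vector_Spaces.linear s s f" "lpoly P"
  shows "ev (\<lambda>p. f (P p)) [:c:] = f (ev P [:c:])"
proof -
  obtain N where N: "vanishes_above N P" using assms(2) lpoly_iff_vanishes_above by blast
  moreover have "vanishes_above N (\<lambda>p. f (P p))"
    using N by (simp add: vanishes_above_def linearD(3)[OF assms(1)])
  ultimately show ?thesis by (simp add: eval_at_const linearD[OF assms(1)])
qed

lemma vanishes_above2_subst_neg:
  assumes Q: "vanishes_above2 N Q"
  shows "vanishes_above2 N (\<lambda>p q. sn (Q p) q)"
proof -
  have "Q p = (\<lambda>q. 0)" if "N < p" for p
    using Q that by (auto simp: vanishes_above2_def)
  moreover have "vanishes_above N (sn (Q p))" for p
    by (rule vanishes_above_subst_neg[OF vanishes_above2_column[OF Q]])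
  ultimately show ?thesis
    by (auto simp: vanishes_above2_def vanishes_above_def subst_neg_zero)
qed

lemma eval2_transpose: "vanishes_above2 N F \<Longrightarrow> eval2 (\<lambda>p q. F q p) c e = eval2 F e c"
  using eval2_swap[OF vanishes_above2_swap] by (simp add: eval2_def)

lemma eval_at_at_sum_subst_neg:
  assumes Q: "vanishes_above2 N Q"
  shows "ev (\<lambda>n. ev (\<lambda>p. at_sum s Q p n) [:c:]) [:- c - e, - 1:] = eval2 (\<lambda>p q. sn (Q p) q) c e"
proof -
  have lpoly_Q: "lpoly (Q n)" for n
    using vanishes_above2_column[OF Q] lpoly_iff_vanishes_above by blast
  have "ev (\<lambda>n. ev (\<lambda>p. at_sum s Q p n) [:c:]) [:- c - e, - 1:] = ev (\<lambda>n. ev (Q n) [:- e, - 1:]) [:c:]"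
    using eval_at_at_sum[OF Q, of c "[:- c - e, - 1:]"] by simp
  also have "\<dots> = eval2 (\<lambda>p q. sn (Q p) q) c e"
    by (simp add: eval2_swap[OF vanishes_above2_subst_neg[OF Q]] eval_at_subst_neg lpoly_Q)
  finally show ?thesis .
qed

lemma jacobi_sign_identity:
  "A - s (psign k j) (C + s (psign i k) D) - s (psign (j \<noteq> k) i) (E - s (psign j k) F)
   = (A - s (psign i j) B) - s (psign k (i \<noteq> j)) D + s (psign k (i \<noteq> j)) (s (psign j i) F)
     + s (psign i j) (B - s (psign k i) E - s (psign (i \<noteq> k) j) C)"
  by (cases i; cases j; cases k)
    (simp_all add: psign_def V.scale_right_diff_distrib V.scale_right_distrib algebra_simps)

end

section \<open>Graded \<open>\<complex>[\<partial>]\<close>-modules\<close>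

locale graded_dmodule =
  fixes s :: "complex \<Rightarrow> 'v::ab_group_add \<Rightarrow> 'v" and G :: "bool \<Rightarrow> 'v set" and d :: "'v \<Rightarrow> 'v"
  assumes graded: "graded_cmodule s G d"
begin

sublocale dmodule s d
  using graded by (simp add: dmodule_def graded_cmodule_def)

lemma grade_disjoint: "G False \<inter> G True = {0}"
  using graded by (simp add: graded_cmodule_def)

lemma grade_decomposition: "\<exists>a\<in>G False. \<exists>b\<in>G True. v = a + b"
  using graded by (simp add: graded_cmodule_def)

lemma grade_d: "x \<in> G i \<Longrightarrow> d x \<in> G i"
  using graded unfolding graded_cmodule_def by blast

lemma grade_subspace: "0 \<in> G i \<and> (\<forall>x\<in>G i. \<forall>y\<in>G i. x + y \<in> G i) \<and> (\<forall>c. \<forall>x\<in>G i. s c x \<in> G i)"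
  using graded module.subspace_def[OF vector_space[unfolded module_iff_vector_space[symmetric]]]
  by (simp add: graded_cmodule_def)

lemma grade_zero: "0 \<in> G i"
  using grade_subspace by simp

lemma grade_add: "x \<in> G i \<Longrightarrow> y \<in> G i \<Longrightarrow> x + y \<in> G i"
  using grade_subspace by simp

lemma grade_scale: "x \<in> G i \<Longrightarrow> s c x \<in> G i"
  using grade_subspace by simp

lemma grade_diff: "x \<in> G i \<Longrightarrow> y \<in> G i \<Longrightarrow> x - y \<in> G i"
  using grade_add[of x i "s (-1) y"] grade_scale[of y i "-1"] by simp

lemma grade_sum: "(\<And>a. a \<in> A \<Longrightarrow> f a \<in> G i) \<Longrightarrow> (\<Sum>a\<in>A. f a) \<in> G i"
  by (induction A rule: infinite_finite_induct) (simp_all add: grade_zero grade_add)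

lemma grade_d_power: "x \<in> G i \<Longrightarrow> (d^^k) x \<in> G i"
  by (induction k) (simp_all add: grade_d)

lemma grade_both_zero: "x \<in> G i \<Longrightarrow> x \<in> G (\<not> i) \<Longrightarrow> x = 0"
  using grade_disjoint by (cases i) auto

lemma comp_unique: "u \<in> G i \<Longrightarrow> v - u \<in> G (\<not> i) \<Longrightarrow> comp G i v = u"
  unfolding comp_def
proof (rule the_equality)
  fix u'
  assume u: "u \<in> G i" "v - u \<in> G (\<not> i)" and u': "u' \<in> G i \<and> v - u' \<in> G (\<not> i)"
  have "u' - u \<in> G i" using u u' grade_diff by blast
  moreover have "u' - u = (v - u) - (v - u')" by simp
  then have "u' - u \<in> G (\<not> i)" using u u' grade_diff by metis
  ultimately show "u' = u" using grade_both_zero by fastforce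
qed auto

lemma comp_mem: "comp G i v \<in> G i" and comp_complement: "v - comp G i v \<in> G (\<not> i)"
proof -
  obtain a b where ab: "a \<in> G False" "b \<in> G True" "v = a + b" using grade_decomposition by blast
  obtain u where "u \<in> G i" "v - u \<in> G (\<not> i)"
    using ab by (cases i) (auto intro!: that[of b] that[of a])
  then show "comp G i v \<in> G i" "v - comp G i v \<in> G (\<not> i)" using comp_unique by auto
qed

lemma comp_eq_self: "v \<in> G i \<Longrightarrow> comp G i v = v"
  by (rule comp_unique) (simp_all add: grade_zero)

lemma comp_eq_zero: "v \<in> G i \<Longrightarrow> j \<noteq> i \<Longrightarrow> comp G j v = 0"
proof (rule comp_unique)
  assume "v \<in> G i" "j \<noteq> i"
  then show "v - 0 \<in> G (\<not> j)" by (cases i; cases j) auto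
qed (simp add: grade_zero)

lemma comp_commute:
  assumes "Vector_Spaces.linear s s f" "\<And>x j. x \<in> G j \<Longrightarrow> f x \<in> G j"
  shows "f (comp G i v) = comp G i (f v)"
proof (rule comp_unique[symmetric])
  show "f (comp G i v) \<in> G i" using assms(2) comp_mem by blast
  have "f v - f (comp G i v) = f (v - comp G i v)" using linearD(5)[OF assms(1)] by simp
  then show "f v - f (comp G i v) \<in> G (\<not> i)" using assms(2) comp_complement by metis
qed

lemma comp_add: "comp G i (v + w) = comp G i v + comp G i w"
proof (rule comp_unique)
  have eq: "v + w - (comp G i v + comp G i w) = (v - comp G i v) + (w - comp G i w)" by simp
  show "v + w - (comp G i v + comp G i w) \<in> G (\<not> i)"
    unfolding eq by (rule grade_add[OF comp_complement comp_complement])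
qed (simp add: grade_add comp_mem)

lemma comp_scale: "comp G i (s c v) = s c (comp G i v)"
proof (rule comp_unique)
  have "s c v - s c (comp G i v) = s c (v - comp G i v)" by (simp add: V.scale_right_diff_distrib)
  then show "s c v - s c (comp G i v) \<in> G (\<not> i)" using grade_scale comp_complement by metis
qed (simp add: grade_scale comp_mem)

lemma comp_d: "comp G i (d v) = d (comp G i v)"
  by (rule comp_commute[symmetric]) (simp_all add: linear_d grade_d)

lemma subst_neg_grade: "(\<And>n. p n \<in> G i) \<Longrightarrow> sn p k \<in> G i"
  unfolding subst_neg_def by (intro grade_sum grade_scale grade_d_power) auto

lemma inv_grade:
  assumes "bij f" "Vector_Spaces.linear s s f" "\<And>x j. x \<in> G j \<Longrightarrow> f x \<in> G j" "x \<in> G i"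
  shows "inv f x \<in> G i"
proof -
  have "f (comp G (\<not> i) (inv f x)) = comp G (\<not> i) x"
    using comp_commute[OF assms(2,3)] assms(1) by (simp add: bij_is_surj surj_f_inv_f)
  also have "\<dots> = 0" using assms(4) by (simp add: comp_eq_zero)
  finally have "comp G (\<not> i) (inv f x) = 0"
    using assms(1,2) by (metis bij_is_inj injD linearD(3))
  moreover have "comp G (\<not> i) (inv f x) = inv f x - comp G i (inv f x)"
    by (rule comp_unique) (simp_all add: comp_complement comp_mem)
  ultimately show ?thesis using comp_mem[of i "inv f x"] by simp
qed

end

section \<open>Direct sums\<close>

lemma mem_prod_grading: "x \<in> prod_grading GR GM i \<longleftrightarrow> fst x \<in> GR i \<and> snd x \<in> GM i"
  by (cases x) (simp add: prod_grading_def)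

lemma prod_scale_simps [simp]:
  "fst (prod_scale sR sM c x) = sR c (fst x)" "snd (prod_scale sR sM c x) = sM c (snd x)"
  by (simp_all add: prod_scale_def)

lemma vector_space_prod_scale:
  assumes "vector_space sR" "vector_space sM"
  shows "vector_space (prod_scale sR sM)"
proof -
  interpret R: vector_space sR by fact
  interpret M: vector_space sM by fact
  show ?thesis
    unfolding vector_space_def prod_scale_def
    by (simp add: R.scale_right_distrib M.scale_right_distrib R.scale_left_distrib M.scale_left_distrib)
qed

lemma linear_prod_scaleI:
  assumes "vector_space sR" "vector_space sM"
    and "\<And>x y. f (x + y) = f x + f y" "\<And>c x. f (prod_scale sR sM c x) = prod_scale sR sM c (f x)"
  shows "Vector_Spaces.linear (prod_scale sR sM) (prod_scale sR sM) f"
  unfolding Vector_Spaces.linear_iff using assms vector_space_prod_scale by blast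

lemma linear_map_prod:
  assumes "Vector_Spaces.linear sR sR f" "Vector_Spaces.linear sM sM g"
  shows "Vector_Spaces.linear (prod_scale sR sM) (prod_scale sR sM) (map_prod f g)"
proof (rule linear_prod_scaleI)
  show "vector_space sR" "vector_space sM"
    using assms by (simp_all add: Vector_Spaces.linear_def module_iff_vector_space)
qed (simp_all add: prod_eq_iff linearD[OF assms(1)] linearD[OF assms(2)])

lemma graded_cmodule_prod:
  assumes R: "graded_cmodule sR GR dR" and M: "graded_cmodule sM GM dM"
  shows "graded_cmodule (prod_scale sR sM) (prod_grading GR GM) (map_prod dR dM)"
proof -
  interpret R: graded_dmodule sR GR dR by (rule graded_dmodule.intro[OF R])
  interpret M: graded_dmodule sM GM dM by (rule graded_dmodule.intro[OF M])
  have vs: "vector_space (prod_scale sR sM)"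
    by (rule vector_space_prod_scale[OF R.vector_space M.vector_space])
  show ?thesis
    unfolding graded_cmodule_def
  proof (intro conjI allI)
    show "module.subspace (prod_scale sR sM) (prod_grading GR GM \<theta>)" for \<theta>
      unfolding module.subspace_def[OF vs[unfolded module_iff_vector_space[symmetric]]]
      by (auto simp: mem_prod_grading R.grade_zero M.grade_zero R.grade_add M.grade_add
          R.grade_scale M.grade_scale)
    show "prod_grading GR GM False \<inter> prod_grading GR GM True = {0}"
      using R.grade_disjoint M.grade_disjoint
      by (auto simp: mem_prod_grading prod_eq_iff R.grade_zero M.grade_zero)
    show "\<exists>a\<in>prod_grading GR GM False. \<exists>b\<in>prod_grading GR GM True. v = a + b" for v
    proof -
      obtain a b where "a \<in> GR False" "b \<in> GR True" "fst v = a + b" using R.grade_decomposition by blast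
      moreover obtain a' b' where "a' \<in> GM False" "b' \<in> GM True" "snd v = a' + b'"
        using M.grade_decomposition by blast
      ultimately show ?thesis
        by (intro bexI[of _ "(a, a')"] bexI[of _ "(b, b')"]) (simp_all add: mem_prod_grading prod_eq_iff)
    qed
    show "map_prod dR dM ` prod_grading GR GM \<theta> \<subseteq> prod_grading GR GM \<theta>" for \<theta>
      by (auto simp: mem_prod_grading R.grade_d M.grade_d)
  qed (use vs linear_map_prod[OF R.linear_d M.linear_d] in simp_all)
qed

lemma at_sum_prod_scale:
  "at_sum (prod_scale sR sM) Q p q = (at_sum sR (\<lambda>n k. fst (Q n k)) p q, at_sum sM (\<lambda>n k. snd (Q n k)) p q)"
  by (simp add: at_sum_def fst_sum snd_sum prod_eq_iff)

lemma subst_neg_prod_scale: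
  assumes R: "dmodule sR dR" and M: "dmodule sM dM" and p: "lpoly p"
  shows "subst_neg (prod_scale sR sM) (map_prod dR dM) p k
    = (subst_neg sR dR (\<lambda>n. fst (p n)) k, subst_neg sM dM (\<lambda>n. snd (p n)) k)"
proof -
  interpret R: dmodule sR dR by (rule R)
  interpret M: dmodule sM dM by (rule M)
  interpret P: dmodule "prod_scale sR sM" "map_prod dR dM"
    by (rule dmodule.intro[OF vector_space_prod_scale[OF R.vector_space M.vector_space]
          linear_map_prod[OF R.linear_d M.linear_d]])
  obtain N where N: "vanishes_above N p" using p lpoly_iff_vanishes_above by blast
  then have "vanishes_above N (\<lambda>n. fst (p n))" "vanishes_above N (\<lambda>n. snd (p n))"
    by (auto simp: vanishes_above_def)
  moreover have "(map_prod dR dM ^^ j) x = ((dR ^^ j) (fst x), (dM ^^ j) (snd x))" for j x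
    by (induction j) auto
  ultimately show ?thesis
    by (simp add: P.subst_neg_eq_sum_atMost[OF N] R.subst_neg_eq_sum_atMost M.subst_neg_eq_sum_atMost
        fst_sum snd_sum prod_eq_iff)
qed

section \<open>The semidirect sum \<open>R \<oplus> M\<close>\<close>

lemma bij_inv_commute: "bij f \<Longrightarrow> (\<And>x. f (g x) = h (f x)) \<Longrightarrow> inv f (h y) = g (inv f y)"
  by (metis bij_inv_eq_iff)

locale bihom_module_setting =
  fixes sR :: "complex \<Rightarrow> 'r::ab_group_add \<Rightarrow> 'r" and GR :: "bool \<Rightarrow> 'r set"
    and dR :: "'r \<Rightarrow> 'r" and br :: "'r \<Rightarrow> 'r \<Rightarrow> nat \<Rightarrow> 'r"
    and \<alpha> \<beta> :: "'r \<Rightarrow> 'r"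
    and sM :: "complex \<Rightarrow> 'm::ab_group_add \<Rightarrow> 'm" and GM :: "bool \<Rightarrow> 'm set"
    and dM :: "'m \<Rightarrow> 'm" and \<rho> :: "'r \<Rightarrow> 'm \<Rightarrow> nat \<Rightarrow> 'm"
    and \<phi> \<psi> :: "'m \<Rightarrow> 'm"
  assumes R: "bihom_lcsa sR GR dR br \<alpha> \<beta>"
    and bij_alpha: "bij \<alpha>"
    and M: "bihom_conf_module sR GR dR br \<alpha> \<beta> sM GM dM \<rho> \<phi> \<psi>"
    and bij_psi: "bij \<psi>"
begin

sublocale R: graded_dmodule sR GR dR
  using R by (simp add: graded_dmodule_def bihom_lcsa_def)

sublocale M: graded_dmodule sM GM dM
  using M by (simp add: graded_dmodule_def bihom_conf_module_def)

lemma alpha_linear: "Vector_Spaces.linear sR sR \<alpha>"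
  and beta_linear: "Vector_Spaces.linear sR sR \<beta>"
  and alpha_beta_commute: "\<alpha> (\<beta> x) = \<beta> (\<alpha> x)"
  and alpha_grade: "x \<in> GR i \<Longrightarrow> \<alpha> x \<in> GR i"
  and beta_grade: "x \<in> GR i \<Longrightarrow> \<beta> x \<in> GR i"
  and bracket_linear_left: "Vector_Spaces.linear sR sR (\<lambda>a. br a b n)"
  and bracket_linear_right: "Vector_Spaces.linear sR sR (\<lambda>b. br a b n)"
  and lpoly_bracket: "lpoly (br a b)"
  and bracket_grade: "a \<in> GR i \<Longrightarrow> b \<in> GR j \<Longrightarrow> br a b n \<in> GR (i \<noteq> j)"
  and alpha_d: "\<alpha> (dR x) = dR (\<alpha> x)"
  and beta_d: "\<beta> (dR x) = dR (\<beta> x)"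
  and alpha_bracket: "\<alpha> (br a b n) = br (\<alpha> a) (\<alpha> b) n"
  and beta_bracket: "\<beta> (br a b n) = br (\<beta> a) (\<beta> b) n"
  and bracket_d_left: "br (dR a) b n = - lshift (br a b) n"
  and bracket_d_right: "br a (dR b) n = dR (br a b n) + lshift (br a b) n"
  and skew_symmetry: "a \<in> GR i \<Longrightarrow> b \<in> GR j \<Longrightarrow>
    br (\<beta> a) (\<alpha> b) n = sR (- psign i j) (subst_neg sR dR (br (\<beta> b) (\<alpha> a)) n)"
  and jacobi: "a \<in> GR i \<Longrightarrow> b \<in> GR j \<Longrightarrow> c \<in> GR k \<Longrightarrow>
    br (\<alpha> (\<beta> a)) (br b c q) p
      = at_sum sR (\<lambda>n. br (br (\<beta> a) b n) (\<beta> c)) p q + sR (psign i j) (br (\<beta> b) (br (\<alpha> a) c p) q)"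
  using R unfolding bihom_lcsa_def by (auto simp: fun_eq_iff image_subset_iff)

lemma phi_linear: "Vector_Spaces.linear sM sM \<phi>"
  and psi_linear: "Vector_Spaces.linear sM sM \<psi>"
  and phi_grade: "x \<in> GM i \<Longrightarrow> \<phi> x \<in> GM i"
  and psi_grade: "x \<in> GM i \<Longrightarrow> \<psi> x \<in> GM i"
  and rho_linear_left: "Vector_Spaces.linear sR sM (\<lambda>a. \<rho> a m n)"
  and rho_linear_right: "Vector_Spaces.linear sM sM (\<lambda>m. \<rho> a m n)"
  and lpoly_rho: "lpoly (\<rho> a m)"
  and rho_grade: "a \<in> GR i \<Longrightarrow> m \<in> GM j \<Longrightarrow> \<rho> a m n \<in> GM (i \<noteq> j)"
  and rho_d_left: "\<rho> (dR a) m n = - lshift (\<rho> a m) n"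
  and rho_d_right: "\<rho> a (dM m) n = dM (\<rho> a m n) + lshift (\<rho> a m) n"
  and phi_psi_commute: "\<phi> (\<psi> x) = \<psi> (\<phi> x)"
  and psi_d: "\<psi> (dM x) = dM (\<psi> x)"
  and phi_d: "\<phi> (dM x) = dM (\<phi> x)"
  and phi_rho: "\<phi> (\<rho> a m n) = \<rho> (\<alpha> a) (\<phi> m) n"
  and psi_rho: "\<psi> (\<rho> a m n) = \<rho> (\<beta> a) (\<psi> m) n"
  and module_axiom: "a \<in> GR i \<Longrightarrow> b \<in> GR j \<Longrightarrow>
    at_sum sM (\<lambda>n. \<rho> (br (\<beta> a) b n) (\<psi> m)) p q
      = \<rho> (\<alpha> (\<beta> a)) (\<rho> b m q) p - sM (psign i j) (\<rho> (\<beta> b) (\<rho> (\<alpha> a) m p) q)"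
  using M unfolding bihom_conf_module_def by (auto simp: fun_eq_iff image_subset_iff)

lemmas beta_simps = linearD[OF beta_linear]
  and phi_simps = linearD[OF phi_linear] and psi_simps = linearD[OF psi_linear]
  and rho_left_simps = linearD[OF rho_linear_left] and rho_right_simps = linearD[OF rho_linear_right]
  and bracket_left_simps = linearD[OF bracket_linear_left]
  and bracket_right_simps = linearD[OF bracket_linear_right]

lemma alpha_inv: "\<alpha> (inv \<alpha> x) = x" and inv_alpha: "inv \<alpha> (\<alpha> x) = x"
  using bij_alpha by (simp_all add: bij_is_surj surj_f_inv_f bij_is_inj)

lemma psi_inv: "\<psi> (inv \<psi> x) = x" and inv_psi: "inv \<psi> (\<psi> x) = x"
  using bij_psi by (simp_all add: bij_is_surj surj_f_inv_f bij_is_inj)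

lemma inv_alpha_linear: "Vector_Spaces.linear sR sR (inv \<alpha>)"
  using alpha_linear bij_alpha bij_module_hom_imp_inv_module_hom
  unfolding Vector_Spaces.linear_iff_module_hom by blast

lemma inv_psi_linear: "Vector_Spaces.linear sM sM (inv \<psi>)"
  using psi_linear bij_psi bij_module_hom_imp_inv_module_hom
  unfolding Vector_Spaces.linear_iff_module_hom by blast

lemmas inv_alpha_simps = linearD[OF inv_alpha_linear] and inv_psi_simps = linearD[OF inv_psi_linear]

lemma inv_alpha_beta: "inv \<alpha> (\<beta> x) = \<beta> (inv \<alpha> x)"
  by (rule bij_inv_commute[where g = \<beta> and h = \<beta>, OF bij_alpha alpha_beta_commute])

lemma inv_alpha_d: "inv \<alpha> (dR x) = dR (inv \<alpha> x)"
  by (rule bij_inv_commute[where g = dR and h = dR, OF bij_alpha alpha_d])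

lemma inv_psi_phi: "inv \<psi> (\<phi> x) = \<phi> (inv \<psi> x)"
  by (rule bij_inv_commute[where g = \<phi> and h = \<phi>, OF bij_psi phi_psi_commute[symmetric]])

lemma inv_psi_d: "inv \<psi> (dM x) = dM (inv \<psi> x)"
  by (rule bij_inv_commute[where g = dM and h = dM, OF bij_psi psi_d])

lemma inv_alpha_bracket: "inv \<alpha> (br a b n) = br (inv \<alpha> a) (inv \<alpha> b) n"
  using bij_alpha by (metis alpha_bracket alpha_inv bij_inv_eq_iff)

lemma inv_psi_rho: "inv \<psi> (\<rho> (\<beta> a) m n) = \<rho> a (inv \<psi> m) n"
  using bij_psi by (metis psi_rho psi_inv bij_inv_eq_iff)

lemma inv_alpha_grade: "x \<in> GR i \<Longrightarrow> inv \<alpha> x \<in> GR i"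
  by (rule R.inv_grade[OF bij_alpha alpha_linear alpha_grade])

lemma inv_psi_grade: "x \<in> GM i \<Longrightarrow> inv \<psi> x \<in> GM i"
  by (rule M.inv_grade[OF bij_psi psi_linear psi_grade])

abbreviation "sd_scale \<equiv> prod_scale sR sM"
abbreviation "sd_grading \<equiv> prod_grading GR GM"
abbreviation "sd_d \<equiv> map_prod dR dM"
abbreviation "sd_br \<equiv> sd_bracket GR br \<alpha> \<beta> sM GM dM \<rho> \<phi> \<psi>"
abbreviation "sd_alpha \<equiv> map_prod \<alpha> \<phi>"
abbreviation "sd_beta \<equiv> map_prod \<beta> \<psi>"

text \<open>\<open>right_action (r, m) (r', m')\<close> is the coefficient sequence of
  \<open>(-1)\<^bsup>|r'||m|\<^esup> \<rho>(\<alpha>\<^sup>-\<^sup>1\<beta> r')\<^sub>-\<^sub>\<lambda>\<^sub>-\<^sub>\<partial> \<phi>\<psi>\<^sup>-\<^sup>1 m\<close>, extended additively from homogeneous components.\<close>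

definition twisted_rho :: "'r \<Rightarrow> 'm \<Rightarrow> nat \<Rightarrow> 'm" where
  "twisted_rho r m = \<rho> (inv \<alpha> (\<beta> r)) (\<phi> (inv \<psi> m))"

definition right_action :: "'r \<times> 'm \<Rightarrow> 'r \<times> 'm \<Rightarrow> nat \<Rightarrow> 'm" where
  "right_action x y n = (\<Sum>i\<in>UNIV. \<Sum>j\<in>UNIV.
     sM (psign i j) (M.sn (twisted_rho (comp GR i (fst y)) (comp GM j (snd x))) n))"

lemma sd_bracket_eq: "sd_br x y n = (br (fst x) (fst y) n, \<rho> (fst x) (snd y) n - right_action x y n)"
  by (simp add: sd_bracket_def right_action_def twisted_rho_def)

lemma lpoly_twisted_rho: "lpoly (twisted_rho r m)"
  by (simp add: twisted_rho_def lpoly_rho)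

lemma twisted_rho_add_left: "twisted_rho (r + r') m = (\<lambda>n. twisted_rho r m n + twisted_rho r' m n)"
  and twisted_rho_scale_left: "twisted_rho (sR c r) m = (\<lambda>n. sM c (twisted_rho r m n))"
  and twisted_rho_zero_left: "twisted_rho 0 m = (\<lambda>n. 0)"
  by (simp_all add: twisted_rho_def fun_eq_iff beta_simps inv_alpha_simps rho_left_simps)

lemma twisted_rho_add_right: "twisted_rho r (m + m') = (\<lambda>n. twisted_rho r m n + twisted_rho r m' n)"
  and twisted_rho_scale_right: "twisted_rho r (sM c m) = (\<lambda>n. sM c (twisted_rho r m n))"
  and twisted_rho_zero_right: "twisted_rho r 0 = (\<lambda>n. 0)"
  by (simp_all add: twisted_rho_def fun_eq_iff phi_simps inv_psi_simps rho_right_simps)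

lemma twisted_rho_grade: "r \<in> GR i \<Longrightarrow> m \<in> GM j \<Longrightarrow> twisted_rho r m n \<in> GM (i \<noteq> j)"
  unfolding twisted_rho_def by (intro rho_grade inv_alpha_grade beta_grade phi_grade inv_psi_grade)

lemma twisted_rho_alpha_psi: "twisted_rho (\<alpha> r) (\<psi> m) = \<rho> (\<beta> r) (\<phi> m)"
  by (simp add: twisted_rho_def inv_alpha_beta inv_alpha inv_psi)

lemma phi_twisted_rho: "\<phi> (twisted_rho r m n) = twisted_rho (\<alpha> r) (\<phi> m) n"
  by (simp add: twisted_rho_def phi_rho alpha_inv inv_alpha_beta alpha_beta_commute inv_alpha inv_psi_phi)

lemma psi_twisted_rho: "\<psi> (twisted_rho r m n) = twisted_rho (\<beta> r) (\<psi> m) n"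
  by (simp add: twisted_rho_def psi_rho inv_alpha_beta phi_psi_commute[symmetric] psi_inv inv_psi)

lemma twisted_rho_d_right: "twisted_rho r (dM m) = (\<lambda>k. dM (twisted_rho r m k) + lshift (twisted_rho r m) k)"
  by (simp add: twisted_rho_def inv_psi_d phi_d rho_d_right fun_eq_iff)

lemma twisted_rho_d_left: "twisted_rho (dR r) m = (\<lambda>k. - lshift (twisted_rho r m) k)"
  by (simp add: twisted_rho_def beta_d inv_alpha_d rho_d_left fun_eq_iff)

lemma right_action_add_left: "right_action (x + x') y n = right_action x y n + right_action x' y n"
  by (simp add: right_action_def M.comp_add twisted_rho_add_right M.subst_neg_add lpoly_twisted_rho
      M.V.scale_right_distrib sum.distrib)

lemma right_action_scale_left: "right_action (sd_scale c x) y n = sM c (right_action x y n)"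
  by (simp add: right_action_def M.comp_scale twisted_rho_scale_right M.subst_neg_scale lpoly_twisted_rho
      M.V.scale_sum_right mult.commute)

lemma right_action_add_right: "right_action x (y + y') n = right_action x y n + right_action x y' n"
  by (simp add: right_action_def R.comp_add twisted_rho_add_left M.subst_neg_add lpoly_twisted_rho
      M.V.scale_right_distrib sum.distrib)

lemma right_action_scale_right: "right_action x (sd_scale c y) n = sM c (right_action x y n)"
  by (simp add: right_action_def R.comp_scale twisted_rho_scale_left M.subst_neg_scale lpoly_twisted_rho
      M.V.scale_sum_right mult.commute)

lemma lpoly_right_action: "lpoly (right_action x y)"
  unfolding right_action_def
  by (intro lpoly_sum lpoly_map[of "sM _"]) (simp_all add: M.lpoly_subst_neg lpoly_twisted_rho)

lemma right_action_homogeneous: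
  assumes "fst y \<in> GR j" "snd x \<in> GM i"
  shows "right_action x y n = sM (psign j i) (M.sn (twisted_rho (fst y) (snd x)) n)"
proof -
  have "comp GR j' (fst y) = (if j' = j then fst y else 0)" for j'
    using assms by (simp add: R.comp_eq_self R.comp_eq_zero)
  moreover have "comp GM i' (snd x) = (if i' = i then snd x else 0)" for i'
    using assms by (simp add: M.comp_eq_self M.comp_eq_zero)
  ultimately show ?thesis
    unfolding right_action_def UNIV_bool
    by (cases i; cases j) (simp_all add: twisted_rho_zero_left twisted_rho_zero_right M.subst_neg_zero)
qed

lemma sd_bracket_homogeneous:
  assumes "x \<in> sd_grading i" "y \<in> sd_grading j"
  shows "sd_br x y n = (br (fst x) (fst y) n,
    \<rho> (fst x) (snd y) n - sM (psign j i) (M.sn (twisted_rho (fst y) (snd x)) n))"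
  using assms by (simp add: sd_bracket_eq mem_prod_grading right_action_homogeneous)

lemma right_action_grade:
  assumes "fst y \<in> GR j" "snd x \<in> GM i"
  shows "right_action x y n \<in> GM (j \<noteq> i)"
  unfolding right_action_homogeneous[OF assms]
  by (intro M.grade_scale M.subst_neg_grade twisted_rho_grade assms)

lemma phi_right_action: "\<phi> (right_action x y n) = right_action (sd_alpha x) (sd_alpha y) n"
  unfolding right_action_def
  by (simp add: phi_simps M.subst_neg_commute[OF phi_linear phi_d lpoly_twisted_rho] phi_twisted_rho
      R.comp_commute[OF alpha_linear alpha_grade] M.comp_commute[OF phi_linear phi_grade])

lemma psi_right_action: "\<psi> (right_action x y n) = right_action (sd_beta x) (sd_beta y) n"
  unfolding right_action_def
  by (simp add: psi_simps M.subst_neg_commute[OF psi_linear psi_d lpoly_twisted_rho] psi_twisted_rho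
      R.comp_commute[OF beta_linear beta_grade] M.comp_commute[OF psi_linear psi_grade])

lemma right_action_d_left: "right_action (sd_d x) y n = - lshift (right_action x y) n"
proof -
  have "right_action (sd_d x) y n = (\<Sum>i\<in>UNIV. \<Sum>j\<in>UNIV.
      sM (psign i j) (- lshift (M.sn (twisted_rho (comp GR i (fst y)) (comp GM j (snd x)))) n))"
    unfolding right_action_def
    by (simp add: M.comp_d twisted_rho_d_right M.subst_neg_d_plus_lshift lpoly_twisted_rho)
  then show ?thesis by (cases n) (simp_all add: lshift_def right_action_def sum_negf)
qed

lemma right_action_d_right: "right_action x (sd_d y) n = dM (right_action x y n) + lshift (right_action x y) n"
proof -
  have "right_action x (sd_d y) n = (\<Sum>i\<in>UNIV. \<Sum>j\<in>UNIV. sM (psign i j)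
      (dM (M.sn (twisted_rho (comp GR i (fst y)) (comp GM j (snd x))) n)
       + lshift (M.sn (twisted_rho (comp GR i (fst y)) (comp GM j (snd x)))) n))"
    unfolding right_action_def
    by (simp add: R.comp_d twisted_rho_d_left M.subst_neg_neg_lshift lpoly_twisted_rho)
  then show ?thesis
    by (cases n) (simp_all add: lshift_def right_action_def M.d_sum M.d_scale M.V.scale_right_distrib
        sum.distrib)
qed

lemma sd_graded_cmodule: "graded_cmodule sd_scale sd_grading sd_d"
  by (rule graded_cmodule_prod[OF R.graded M.graded])

lemma sd_alpha_grade: "x \<in> sd_grading i \<Longrightarrow> sd_alpha x \<in> sd_grading i"
  and sd_beta_grade: "x \<in> sd_grading i \<Longrightarrow> sd_beta x \<in> sd_grading i"
  by (simp_all add: mem_prod_grading alpha_grade beta_grade phi_grade psi_grade)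

lemma sd_bracket_linear_left: "Vector_Spaces.linear sd_scale sd_scale (\<lambda>x. sd_br x y n)"
  by (rule linear_prod_scaleI[OF R.vector_space M.vector_space])
    (simp_all add: prod_eq_iff sd_bracket_eq bracket_left_simps rho_left_simps right_action_add_left
      right_action_scale_left M.V.scale_right_diff_distrib)

lemma sd_bracket_linear_right: "Vector_Spaces.linear sd_scale sd_scale (\<lambda>y. sd_br x y n)"
  by (rule linear_prod_scaleI[OF R.vector_space M.vector_space])
    (simp_all add: prod_eq_iff sd_bracket_eq bracket_right_simps rho_right_simps right_action_add_right
      right_action_scale_right M.V.scale_right_diff_distrib)

lemma lpoly_sd_bracket: "lpoly (sd_br x y)"
proof -
  have "lpoly (\<lambda>n. \<rho> (fst x) (snd y) n - right_action x y n)"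
    by (rule lpoly_diff[OF lpoly_rho lpoly_right_action])
  then show ?thesis
    using lpoly_bracket[of "fst x" "fst y"] unfolding lpoly_def sd_bracket_eq
    by (rule finite_subset[rotated, OF finite_UnI]) (auto simp: prod_eq_iff)
qed

lemma sd_bracket_grade:
  assumes "x \<in> sd_grading i" "y \<in> sd_grading j"
  shows "sd_br x y n \<in> sd_grading (i \<noteq> j)"
proof -
  have h: "fst x \<in> GR i" "snd x \<in> GM i" "fst y \<in> GR j" "snd y \<in> GM j"
    using assms by (simp_all add: mem_prod_grading)
  have "right_action x y n \<in> GM (i \<noteq> j)"
    using right_action_grade[OF h(3) h(2)] by (simp add: eq_commute[of j])
  then show ?thesis
    unfolding mem_prod_grading sd_bracket_eq fst_conv snd_conv
    by (intro conjI M.grade_diff bracket_grade rho_grade h)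
qed

lemma sd_alpha_bracket: "sd_alpha (sd_br x y n) = sd_br (sd_alpha x) (sd_alpha y) n"
  by (simp add: sd_bracket_eq alpha_bracket phi_simps phi_rho phi_right_action)

lemma sd_beta_bracket: "sd_beta (sd_br x y n) = sd_br (sd_beta x) (sd_beta y) n"
  by (simp add: sd_bracket_eq beta_bracket psi_simps psi_rho psi_right_action)

lemma sd_bracket_d_left: "sd_br (sd_d x) y n = - lshift (sd_br x y) n"
  by (cases n) (simp_all add: sd_bracket_eq bracket_d_left rho_d_left right_action_d_left lshift_def
      prod_eq_iff)

lemma sd_bracket_d_right: "sd_br x (sd_d y) n = sd_d (sd_br x y n) + lshift (sd_br x y) n"
  by (cases n) (simp_all add: sd_bracket_eq bracket_d_right rho_d_right right_action_d_right lshift_def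
      prod_eq_iff M.d_diff)

lemma sd_skew_symmetry:
  assumes x: "x \<in> sd_grading i" and y: "y \<in> sd_grading j"
  shows "sd_br (sd_beta x) (sd_alpha y) n
    = sd_scale (- psign i j) (subst_neg sd_scale sd_d (sd_br (sd_beta y) (sd_alpha x)) n)"
proof -
  obtain r m r' m' where xy: "x = (r, m)" "y = (r', m')" by fastforce
  have r: "r \<in> GR i" and r': "r' \<in> GR j" using x y xy by (simp_all add: mem_prod_grading)
  have "lpoly (\<lambda>k. sM (psign i j) (M.sn (\<rho> (\<beta> r) (\<phi> m')) k))"
    by (intro lpoly_map[where f = "sM _"] M.lpoly_subst_neg lpoly_rho) simp
  moreover have "sd_br (sd_beta y) (sd_alpha x) = (\<lambda>k. (br (\<beta> r') (\<alpha> r) k,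
      \<rho> (\<beta> r') (\<phi> m) k - sM (psign i j) (M.sn (\<rho> (\<beta> r) (\<phi> m')) k)))"
    using sd_bracket_homogeneous[OF sd_beta_grade[OF y] sd_alpha_grade[OF x]] xy
    by (simp add: fun_eq_iff twisted_rho_alpha_psi)
  ultimately have "subst_neg sd_scale sd_d (sd_br (sd_beta y) (sd_alpha x)) n =
      (R.sn (br (\<beta> r') (\<alpha> r)) n, M.sn (\<rho> (\<beta> r') (\<phi> m)) n - sM (psign i j) (\<rho> (\<beta> r) (\<phi> m') n))"
    using lpoly_sd_bracket[of "sd_beta y" "sd_alpha x"]
    by (simp add: subst_neg_prod_scale[OF R.dmodule_axioms M.dmodule_axioms] lpoly_rho M.subst_neg_diff
        M.subst_neg_scale M.lpoly_subst_neg M.subst_neg_involutive)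
  moreover have "sd_br (sd_beta x) (sd_alpha y) n = (br (\<beta> r) (\<alpha> r') n,
      \<rho> (\<beta> r) (\<phi> m') n - sM (psign j i) (M.sn (\<rho> (\<beta> r') (\<phi> m)) n))"
    using sd_bracket_homogeneous[OF sd_beta_grade[OF x] sd_alpha_grade[OF y]] xy
    by (simp add: twisted_rho_alpha_psi)
  ultimately show ?thesis
    using skew_symmetry[OF r r', of n]
    by (simp add: prod_scale_def psign_commute[of j i] M.V.scale_right_diff_distrib psign_square)
qed

lemma eval_at_rho_eval_at:
  "lpoly P \<Longrightarrow> M.ev (\<rho> z (M.ev P g)) h = M.ev (\<lambda>n. M.ev (\<rho> z (P n)) h) (pcompose g ([:0, 1:] + h))"
  by (rule M.eval_at_eval_at_sesqui) (simp_all add: rho_right_simps lpoly_rho rho_d_right)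

lemma ex_vanishes_above2_rho: "lpoly P \<Longrightarrow> \<exists>N. vanishes_above2 N (\<lambda>p q. \<rho> a (P p) q)"
  by (rule ex_vanishes_above2_compose) (simp_all add: lpoly_rho rho_right_simps)

lemma ex_vanishes_above2_rho_swapped: "lpoly P \<Longrightarrow> \<exists>N. vanishes_above2 N (\<lambda>p q. \<rho> a (P q) p)"
  using ex_vanishes_above2_rho vanishes_above2_swap by blast

lemma ex_vanishes_above2_subst_neg_rho: "\<exists>N. vanishes_above2 N (\<lambda>p q. M.sn (\<rho> a (P p)) q)" if "lpoly P"
  by (rule ex_vanishes_above2_compose[OF that])
    (simp_all add: rho_right_simps M.subst_neg_zero M.lpoly_subst_neg lpoly_rho)

lemma ex_vanishes_above2_rho_bracket:
  "\<exists>N. vanishes_above2 N (\<lambda>p q. \<rho> (br a b p) m q)"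
  by (rule ex_vanishes_above2_compose[OF lpoly_bracket]) (simp_all add: rho_left_simps lpoly_rho)

lemma ex_vanishes_above2_subst_neg_rho_bracket:
  "\<exists>N. vanishes_above2 N (\<lambda>p q. M.sn (\<rho> (br a b p) m) q)"
  by (rule ex_vanishes_above2_compose[OF lpoly_bracket])
    (simp_all add: rho_left_simps M.subst_neg_zero M.lpoly_subst_neg lpoly_rho)

lemma eval2_rho_subst_neg_rho:
  "M.eval2 (\<lambda>p q. \<rho> z (M.sn (\<rho> y v) q) p) c e = M.ev (\<lambda>n. M.ev (\<rho> z (\<rho> y v n)) [:c:]) [:- c - e, - 1:]"
proof -
  have "M.eval2 (\<lambda>p q. \<rho> z (M.sn (\<rho> y v) q) p) c e = M.ev (\<rho> z (M.ev (M.sn (\<rho> y v)) [:e:])) [:c:]"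
    unfolding M.eval2_def by (simp add: eval_at_rho_eval_at M.lpoly_subst_neg lpoly_rho)
  also have "\<dots> = M.ev (\<lambda>n. M.ev (\<rho> z (\<rho> y v n)) [:c:]) [:- c - e, - 1:]"
    by (simp add: M.eval_at_subst_neg lpoly_rho eval_at_rho_eval_at pcompose_pCons algebra_simps)
  finally show ?thesis .
qed

lemma eval2_at_sum_subst_neg_rho:
  assumes P: "lpoly P"
  shows "M.eval2 (at_sum sM (\<lambda>n k. M.sn (\<rho> z (P n)) k)) c e = M.ev (\<rho> z (M.ev P [:c:])) [:- c - e, - 1:]"
proof -
  obtain N where N: "vanishes_above2 N (\<lambda>n k. M.sn (\<rho> z (P n)) k)"
    using ex_vanishes_above2_subst_neg_rho[OF P] by blast
  have "M.eval2 (at_sum sM (\<lambda>n k. M.sn (\<rho> z (P n)) k)) c e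
      = M.ev (\<lambda>n. M.ev (M.sn (\<rho> z (P n))) ([:c:] + [:e:])) [:c:]"
    unfolding M.eval2_def using M.eval_at_at_sum[OF N] by simp
  also have "\<dots> = M.ev (\<lambda>n. M.ev (\<rho> z (P n)) [:- c - e, - 1:]) [:c:]"
    by (simp add: M.eval_at_subst_neg lpoly_rho)
  also have "\<dots> = M.ev (\<rho> z (M.ev P [:c:])) [:- c - e, - 1:]"
    by (simp add: eval_at_rho_eval_at[OF P])
  finally show ?thesis .
qed

lemma module_axiom_eval:
  assumes a: "a \<in> GR i" and b: "b \<in> GR j"
  shows "M.ev (\<lambda>q. M.ev (\<lambda>p. at_sum sM (\<lambda>n. \<rho> (br (\<beta> a) b n) (\<psi> m)) p q) [:c:]) h
    = M.ev (\<lambda>q. M.ev (\<rho> (\<alpha> (\<beta> a)) (\<rho> b m q)) [:c:]) h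
      - sM (psign i j) (M.ev (\<rho> (\<beta> b) (M.ev (\<rho> (\<alpha> a) m) [:c:])) h)"
proof -
  obtain N1 where N1: "vanishes_above2 N1 (\<lambda>p q. \<rho> (\<beta> b) (\<rho> (\<alpha> a) m p) q)"
    using ex_vanishes_above2_rho[OF lpoly_rho] by blast
  obtain N2 where N2: "vanishes_above2 N2 (\<lambda>p q. \<rho> (\<alpha> (\<beta> a)) (\<rho> b m q) p)"
    using ex_vanishes_above2_rho_swapped[OF lpoly_rho] by blast
  have row: "lpoly (\<lambda>p. sM (psign i j) (\<rho> (\<beta> b) (\<rho> (\<alpha> a) m p) q))" for q
    by (rule lpoly_map[OF _ lpoly_row[OF N1]]) simp
  have "M.ev (\<lambda>p. at_sum sM (\<lambda>n. \<rho> (br (\<beta> a) b n) (\<psi> m)) p q) [:c:]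
      = M.ev (\<rho> (\<alpha> (\<beta> a)) (\<rho> b m q)) [:c:] - sM (psign i j) (\<rho> (\<beta> b) (M.ev (\<rho> (\<alpha> a) m) [:c:]) q)"
    for q
    unfolding module_axiom[OF a b] M.eval_at_diff[OF lpoly_rho row] M.eval_at_scale[OF lpoly_row[OF N1]]
    by (simp add: M.eval_at_const_linear[OF rho_linear_right lpoly_rho])
  moreover have "lpoly (\<lambda>q. sM (psign i j) (\<rho> (\<beta> b) (M.ev (\<rho> (\<alpha> a) m) [:c:]) q))"
    by (rule lpoly_map[OF _ lpoly_rho]) simp
  ultimately show ?thesis
    by (simp add: M.eval_at_diff M.eval_at_scale M.lpoly_eval_rows[OF N2] lpoly_rho)
qed

lemma module_axiom_subst_mu:
  assumes u: "u \<in> GR i" and y: "y \<in> GR k"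
  shows "\<rho> (\<alpha> (\<beta> u)) (M.sn (\<rho> y v) q) p
    = M.sn (\<rho> (br (\<beta> u) y p) (\<psi> v)) q
      + sM (psign i k) (at_sum sM (\<lambda>n k'. M.sn (\<rho> (\<beta> y) (\<rho> (\<alpha> u) v n)) k') p q)"
proof -
  define Q where "Q = (\<lambda>n. \<rho> (br (\<beta> u) y n) (\<psi> v))"
  obtain NL where NL: "vanishes_above2 NL (\<lambda>p q. \<rho> (\<alpha> (\<beta> u)) (M.sn (\<rho> y v) q) p)"
    using ex_vanishes_above2_rho_swapped[OF M.lpoly_subst_neg[OF lpoly_rho]] by blast
  obtain NQ where NQ: "vanishes_above2 NQ (\<lambda>n k. Q n k)"
    unfolding Q_def using ex_vanishes_above2_rho_bracket by blast
  obtain NS where NS: "vanishes_above2 NS (\<lambda>p q. M.sn (Q p) q)"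
    unfolding Q_def using ex_vanishes_above2_subst_neg_rho_bracket by blast
  obtain NR where NR: "vanishes_above2 NR (\<lambda>n k'. M.sn (\<rho> (\<beta> y) (\<rho> (\<alpha> u) v n)) k')"
    using ex_vanishes_above2_subst_neg_rho[OF lpoly_rho] by blast
  note NR2 = vanishes_above2_map[where f = "sM _", OF _ M.vanishes_above2_at_sum[OF NR]]
  have "\<rho> (\<alpha> (\<beta> u)) (M.sn (\<rho> y v) q) p = M.sn (Q p) q
      + sM (psign i k) (at_sum sM (\<lambda>n k'. M.sn (\<rho> (\<beta> y) (\<rho> (\<alpha> u) v n)) k') p q)"
  proof (rule M.vanishes_above2_eqI[OF NL vanishes_above2_add[OF NS NR2]])
    fix c e
    have "M.eval2 (\<lambda>p q. \<rho> (\<alpha> (\<beta> u)) (M.sn (\<rho> y v) q) p) c e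
        = M.ev (\<lambda>q. M.ev (\<rho> (\<alpha> (\<beta> u)) (\<rho> y v q)) [:c:]) [:- c - e, - 1:]"
      by (rule eval2_rho_subst_neg_rho)
    also have "\<dots> = M.ev (\<lambda>q. M.ev (\<lambda>p. at_sum sM Q p q) [:c:]) [:- c - e, - 1:]
          + sM (psign i k) (M.ev (\<rho> (\<beta> y) (M.ev (\<rho> (\<alpha> u) v) [:c:])) [:- c - e, - 1:])"
      using module_axiom_eval[OF u y, of v c "[:- c - e, - 1:]"] unfolding Q_def
      by (simp add: eq_diff_eq)
    also have "\<dots> = M.eval2 (\<lambda>p q. M.sn (Q p) q) c e
        + sM (psign i k) (M.eval2 (at_sum sM (\<lambda>n k'. M.sn (\<rho> (\<beta> y) (\<rho> (\<alpha> u) v n)) k')) c e)"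
      by (simp add: M.eval_at_at_sum_subst_neg[OF NQ] eval2_at_sum_subst_neg_rho lpoly_rho)
    finally show "M.eval2 (\<lambda>p q. \<rho> (\<alpha> (\<beta> u)) (M.sn (\<rho> y v) q) p) c e
        = M.eval2 (\<lambda>p q. M.sn (Q p) q
            + sM (psign i k) (at_sum sM (\<lambda>n k'. M.sn (\<rho> (\<beta> y) (\<rho> (\<alpha> u) v n)) k') p q)) c e"
      by (simp add: M.eval2_add[OF NS NR2] M.eval2_scale[OF M.vanishes_above2_at_sum[OF NR]])
  qed simp
  then show ?thesis by (simp add: Q_def)
qed

lemma eval2_at_sum_subst_neg_rho_subst_neg:
  assumes P: "lpoly P"
  shows "M.eval2 (at_sum sM (\<lambda>n k. M.sn (\<rho> z (M.sn P n)) k)) c e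
    = M.ev (\<rho> z (M.ev P [:e:])) [:- e - c, - 1:]"
proof -
  have h: "[:- c - e, - 1:] = [:- e - c, - 1:]" by (simp add: algebra_simps)
  have "M.eval2 (at_sum sM (\<lambda>n k. M.sn (\<rho> z (M.sn P n)) k)) c e
      = M.ev (\<rho> z (M.ev P [:- c, - 1:])) [:- e - c, - 1:]"
    by (simp add: eval2_at_sum_subst_neg_rho M.lpoly_subst_neg P M.eval_at_subst_neg h)
  also have "\<dots> = M.ev (\<rho> z (M.ev P [:e:])) [:- e - c, - 1:]"
    by (simp add: eval_at_rho_eval_at P pcompose_pCons)
  finally show ?thesis .
qed

lemma module_axiom_subst_lambda:
  assumes x: "x \<in> GR j" and y: "y \<in> GR k"
  shows "M.sn (\<rho> (br (\<beta> x) y q) (\<psi> w)) p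
    = \<rho> (\<alpha> (\<beta> x)) (M.sn (\<rho> y w) p) q
      - sM (psign j k) (at_sum sM (\<lambda>n k'. M.sn (\<rho> (\<beta> y) (M.sn (\<rho> (\<alpha> x) w) n)) k') p q)"
proof -
  define Q where "Q = (\<lambda>n. \<rho> (br (\<beta> x) y n) (\<psi> w))"
  obtain NQ where NQ: "vanishes_above2 NQ (\<lambda>n k. Q n k)"
    unfolding Q_def using ex_vanishes_above2_rho_bracket by blast
  obtain NS where NS: "vanishes_above2 NS (\<lambda>p q. M.sn (Q p) q)"
    unfolding Q_def using ex_vanishes_above2_subst_neg_rho_bracket by blast
  obtain NA where NA: "vanishes_above2 NA (\<lambda>p q. \<rho> (\<alpha> (\<beta> x)) (M.sn (\<rho> y w) q) p)"
    using ex_vanishes_above2_rho_swapped[OF M.lpoly_subst_neg[OF lpoly_rho]] by blast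
  obtain NR where NR: "vanishes_above2 NR (\<lambda>n k'. M.sn (\<rho> (\<beta> y) (M.sn (\<rho> (\<alpha> x) w) n)) k')"
    using ex_vanishes_above2_subst_neg_rho[OF M.lpoly_subst_neg[OF lpoly_rho]] by blast
  note NR2 = vanishes_above2_map[where f = "sM _", OF _ M.vanishes_above2_at_sum[OF NR]]
  note NA' = vanishes_above2_swap[OF NA]
  have "M.sn (Q q) p = \<rho> (\<alpha> (\<beta> x)) (M.sn (\<rho> y w) p) q
      - sM (psign j k) (at_sum sM (\<lambda>n k'. M.sn (\<rho> (\<beta> y) (M.sn (\<rho> (\<alpha> x) w) n)) k') p q)"
  proof (rule M.vanishes_above2_eqI[OF vanishes_above2_swap[OF NS] vanishes_above2_diff[OF NA' NR2]])
    fix c e :: complex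
    let ?h = "[:- e - c, - 1:]"
    note third = eval2_at_sum_subst_neg_rho_subst_neg[OF lpoly_rho[of "\<alpha> x" w], where z = "\<beta> y"]
    have "M.eval2 (\<lambda>p q. M.sn (Q q) p) c e = M.ev (\<lambda>n. M.ev (\<lambda>p. at_sum sM Q p n) [:e:]) ?h"
      by (simp add: M.eval2_transpose[OF NS] M.eval_at_at_sum_subst_neg[OF NQ])
    also have "\<dots> = M.ev (\<lambda>q. M.ev (\<rho> (\<alpha> (\<beta> x)) (\<rho> y w q)) [:e:]) ?h
        - sM (psign j k) (M.ev (\<rho> (\<beta> y) (M.ev (\<rho> (\<alpha> x) w) [:e:])) ?h)"
      unfolding Q_def by (rule module_axiom_eval[OF x y])
    also have "\<dots> = M.eval2 (\<lambda>p q. \<rho> (\<alpha> (\<beta> x)) (M.sn (\<rho> y w) p) q) c e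
        - sM (psign j k) (M.eval2 (at_sum sM (\<lambda>n k'. M.sn (\<rho> (\<beta> y) (M.sn (\<rho> (\<alpha> x) w) n)) k')) c e)"
      by (simp add: third M.eval2_transpose[OF NA] eval2_rho_subst_neg_rho)
    finally show "M.eval2 (\<lambda>p q. M.sn (Q q) p) c e
        = M.eval2 (\<lambda>p q. \<rho> (\<alpha> (\<beta> x)) (M.sn (\<rho> y w) p) q
            - sM (psign j k) (at_sum sM (\<lambda>n k'. M.sn (\<rho> (\<beta> y) (M.sn (\<rho> (\<alpha> x) w) n)) k') p q)) c e"
      by (simp add: M.eval2_diff[OF NA' NR2] M.eval2_scale[OF M.vanishes_above2_at_sum[OF NR]])
  qed simp
  then show ?thesis by (simp add: Q_def)
qed

lemma twisted_rho_psi: "twisted_rho r (\<psi> m) = \<rho> (inv \<alpha> (\<beta> r)) (\<phi> m)"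
  by (simp add: twisted_rho_def inv_psi)

lemma twisted_rho_bracket:
  "twisted_rho (br a b q) (\<psi> m) = \<rho> (br (\<beta> (inv \<alpha> a)) (inv \<alpha> (\<beta> b)) q) (\<psi> (\<phi> (inv \<psi> m)))"
  by (simp add: twisted_rho_psi inv_alpha_bracket inv_alpha_beta beta_bracket phi_psi_commute[symmetric] psi_inv)

lemma phi_inv_psi_rho: "\<phi> (inv \<psi> (\<rho> (\<beta> a) m n)) = \<rho> (\<alpha> a) (\<phi> (inv \<psi> m)) n"
  by (simp add: inv_psi_rho phi_rho)

lemma phi_inv_psi_subst_neg: "lpoly P \<Longrightarrow> \<phi> (inv \<psi> (M.sn P n)) = M.sn (\<lambda>k. \<phi> (inv \<psi> (P k))) n"
  using M.subst_neg_commute[of "\<phi> \<circ> inv \<psi>"] Vector_Spaces.linear_compose[OF inv_psi_linear phi_linear]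
  by (simp add: inv_psi_d phi_d)

lemma sd_jacobi_fst:
  assumes "a \<in> sd_grading i" "b \<in> sd_grading j" "c \<in> sd_grading k"
  shows "fst (sd_br (sd_alpha (sd_beta a)) (sd_br b c q) p)
    = fst (at_sum sd_scale (\<lambda>n. sd_br (sd_br (sd_beta a) b n) (sd_beta c)) p q
        + sd_scale (psign i j) (sd_br (sd_beta b) (sd_br (sd_alpha a) c p) q))"
  using jacobi[of "fst a" i "fst b" j "fst c" k q p] assms
  by (simp add: sd_bracket_eq at_sum_prod_scale mem_prod_grading)

lemma sd_jacobi_snd_lhs:
  assumes "(u, m1) \<in> sd_grading i" "(v, m2) \<in> sd_grading j" "(w, m3) \<in> sd_grading k"
  shows "snd (sd_br (sd_alpha (sd_beta (u, m1))) (sd_br (v, m2) (w, m3) q) p)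
    = \<rho> (\<alpha> (\<beta> u)) (\<rho> v m3 q) p
      - sM (psign k j) (\<rho> (\<alpha> (\<beta> u)) (M.sn (\<rho> (inv \<alpha> (\<beta> w)) (\<phi> (inv \<psi> m2))) q) p)
      - sM (psign (j \<noteq> k) i)
          (M.sn (\<rho> (br (\<beta> (inv \<alpha> v)) (inv \<alpha> (\<beta> w)) q) (\<psi> (\<phi> (inv \<psi> (\<phi> m1))))) p)"
proof -
  have "sd_alpha (sd_beta (u, m1)) \<in> sd_grading i" using assms(1) sd_alpha_grade sd_beta_grade by blast
  then show ?thesis
    using sd_bracket_homogeneous[OF _ sd_bracket_grade[OF assms(2,3)]] sd_bracket_homogeneous[OF assms(2,3)]
    by (simp add: twisted_rho_def[of w] twisted_rho_bracket[symmetric] phi_psi_commute rho_right_simps)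
qed

lemma sd_jacobi_snd_second:
  assumes "(u, m1) \<in> sd_grading i" "(v, m2) \<in> sd_grading j" "(w, m3) \<in> sd_grading k"
  shows "snd (sd_scale (psign i j) (sd_br (sd_beta (v, m2)) (sd_br (sd_alpha (u, m1)) (w, m3) p) q))
    = sM (psign i j) (\<rho> (\<beta> v) (\<rho> (\<alpha> u) m3 p) q
      - sM (psign k i) (\<rho> (\<beta> v) (M.sn (\<rho> (inv \<alpha> (\<beta> w)) (\<phi> (inv \<psi> (\<phi> m1)))) p) q)
      - sM (psign (i \<noteq> k) j) (M.sn (\<rho> (br (\<beta> u) (inv \<alpha> (\<beta> w)) p) (\<psi> (\<phi> (inv \<psi> m2)))) q))"
proof -
  have a: "sd_alpha (u, m1) \<in> sd_grading i" and b: "sd_beta (v, m2) \<in> sd_grading j"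
    using assms sd_alpha_grade sd_beta_grade by blast+
  show ?thesis
    using sd_bracket_homogeneous[OF b sd_bracket_grade[OF a assms(3)]] sd_bracket_homogeneous[OF a assms(3)]
    by (simp add: twisted_rho_def[of w] twisted_rho_bracket inv_alpha rho_right_simps)
qed

lemma rho_diff_fun: "\<rho> a (x - y) = (\<lambda>n. \<rho> a x n - \<rho> a y n)"
  and rho_scale_fun: "\<rho> a (sM c x) = (\<lambda>n. sM c (\<rho> a x n))"
  by (simp_all add: fun_eq_iff rho_right_simps)

lemma sd_jacobi_snd_first:
  assumes "(u, m1) \<in> sd_grading i" "(v, m2) \<in> sd_grading j" "(w, m3) \<in> sd_grading k"
  shows "snd (at_sum sd_scale (\<lambda>n. sd_br (sd_br (sd_beta (u, m1)) (v, m2) n) (sd_beta (w, m3))) p q)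
    = at_sum sM (\<lambda>n. \<rho> (br (\<beta> u) v n) (\<psi> m3)) p q
      - sM (psign k (i \<noteq> j))
          (at_sum sM (\<lambda>n k'. M.sn (\<rho> (\<beta> (inv \<alpha> (\<beta> w))) (\<rho> (\<alpha> u) (\<phi> (inv \<psi> m2)) n)) k') p q)
      + sM (psign k (i \<noteq> j)) (sM (psign j i)
          (at_sum sM (\<lambda>n k'. M.sn (\<rho> (\<beta> (inv \<alpha> (\<beta> w)))
             (M.sn (\<rho> v (\<phi> (inv \<psi> (\<phi> m1)))) n)) k') p q))"
proof -
  let ?y = "\<beta> (inv \<alpha> (\<beta> w))"
  have a: "sd_beta (u, m1) \<in> sd_grading i" and c: "sd_beta (w, m3) \<in> sd_grading k"
    using assms sd_beta_grade by blast+
  have inner: "\<phi> (inv \<psi> (M.sn (twisted_rho v (\<psi> m1)) n)) = M.sn (\<rho> v (\<phi> (inv \<psi> (\<phi> m1)))) n" for n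
    by (simp add: twisted_rho_psi phi_inv_psi_subst_neg lpoly_rho inv_alpha_beta phi_inv_psi_rho alpha_inv)
  have "snd (sd_br (sd_br (sd_beta (u, m1)) (v, m2) n) (sd_beta (w, m3)) k')
      = \<rho> (br (\<beta> u) v n) (\<psi> m3) k'
        - sM (psign k (i \<noteq> j)) (M.sn (\<rho> ?y (\<rho> (\<alpha> u) (\<phi> (inv \<psi> m2)) n)) k')
        + sM (psign k (i \<noteq> j)) (sM (psign j i) (M.sn (\<rho> ?y (M.sn (\<rho> v (\<phi> (inv \<psi> (\<phi> m1)))) n)) k'))"
    for n k'
    using sd_bracket_homogeneous[OF sd_bracket_grade[OF a assms(2)] c] sd_bracket_homogeneous[OF a assms(2)]
    by (simp add: twisted_rho_def[of "\<beta> w"] inv_alpha_beta inv_psi_simps phi_simps inner phi_inv_psi_rho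
        rho_right_simps rho_diff_fun rho_scale_fun M.subst_neg_diff M.subst_neg_scale lpoly_rho lpoly_map
        M.V.scale_right_diff_distrib flip: twisted_rho_def)
  then show ?thesis
    by (simp add: at_sum_prod_scale M.at_sum_add M.at_sum_diff M.at_sum_scale)
qed

lemma sd_jacobi:
  assumes a: "a \<in> sd_grading i" and b: "b \<in> sd_grading j" and c: "c \<in> sd_grading k"
  shows "sd_br (sd_alpha (sd_beta a)) (sd_br b c q) p
    = at_sum sd_scale (\<lambda>n. sd_br (sd_br (sd_beta a) b n) (sd_beta c)) p q
      + sd_scale (psign i j) (sd_br (sd_beta b) (sd_br (sd_alpha a) c p) q)"
proof -
  obtain u m1 v m2 w m3 where abc: "a = (u, m1)" "b = (v, m2)" "c = (w, m3)" by fastforce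
  have a': "(u, m1) \<in> sd_grading i" and b': "(v, m2) \<in> sd_grading j" and c': "(w, m3) \<in> sd_grading k"
    using a b c abc by simp_all
  then have u: "u \<in> GR i" and v: "v \<in> GR j" and w: "w \<in> GR k"
    by (simp_all add: mem_prod_grading)
  have v': "inv \<alpha> v \<in> GR j" and w': "inv \<alpha> (\<beta> w) \<in> GR k"
    by (simp_all add: inv_alpha_grade beta_grade v w)
  have alpha_beta_v: "\<alpha> (\<beta> (inv \<alpha> v)) = \<beta> v" by (simp add: alpha_beta_commute alpha_inv)
  have "snd (sd_br (sd_alpha (sd_beta a)) (sd_br b c q) p)
      = snd (at_sum sd_scale (\<lambda>n. sd_br (sd_br (sd_beta a) b n) (sd_beta c)) p q
        + sd_scale (psign i j) (sd_br (sd_beta b) (sd_br (sd_alpha a) c p) q))"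
    unfolding abc snd_add sd_jacobi_snd_lhs[OF a' b' c'] sd_jacobi_snd_first[OF a' b' c']
      sd_jacobi_snd_second[OF a' b' c']
    unfolding module_axiom[OF u v] module_axiom_subst_mu[OF u w'] module_axiom_subst_lambda[OF v' w']
      alpha_beta_v alpha_inv
    by (rule M.jacobi_sign_identity)
  then show ?thesis
    using sd_jacobi_fst[OF a b c] by (simp add: prod_eq_iff)
qed

theorem bihom_lcsa_semidirect_sum: "bihom_lcsa sd_scale sd_grading sd_d sd_br sd_alpha sd_beta"
proof -
  have "sd_alpha \<circ> sd_beta = sd_beta \<circ> sd_alpha" "sd_alpha \<circ> sd_d = sd_d \<circ> sd_alpha"
    "sd_beta \<circ> sd_d = sd_d \<circ> sd_beta"
    by (simp_all add: fun_eq_iff alpha_beta_commute phi_psi_commute alpha_d phi_d beta_d psi_d)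
  moreover have "sd_alpha ` sd_grading \<theta> \<subseteq> sd_grading \<theta>" "sd_beta ` sd_grading \<theta> \<subseteq> sd_grading \<theta>" for \<theta>
    by (auto simp: mem_prod_grading alpha_grade beta_grade phi_grade psi_grade)
  ultimately show ?thesis
    unfolding bihom_lcsa_def
    by (intro conjI allI impI)
      (assumption | rule sd_graded_cmodule linear_map_prod alpha_linear beta_linear phi_linear psi_linear
        sd_bracket_linear_left sd_bracket_linear_right lpoly_sd_bracket sd_bracket_grade sd_alpha_bracket
        sd_beta_bracket sd_bracket_d_left sd_bracket_d_right sd_skew_symmetry sd_jacobi)+
qed

end

theorem mainTheorem6:
  fixes sR :: "complex \<Rightarrow> 'r::ab_group_add \<Rightarrow> 'r" and GR :: "bool \<Rightarrow> 'r set"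
    and dR :: "'r \<Rightarrow> 'r" and br :: "'r \<Rightarrow> 'r \<Rightarrow> nat \<Rightarrow> 'r"
    and \<alpha> \<beta> :: "'r \<Rightarrow> 'r"
    and sM :: "complex \<Rightarrow> 'm::ab_group_add \<Rightarrow> 'm" and GM :: "bool \<Rightarrow> 'm set"
    and dM :: "'m \<Rightarrow> 'm" and \<rho> :: "'r \<Rightarrow> 'm \<Rightarrow> nat \<Rightarrow> 'm"
    and \<phi> \<psi> :: "'m \<Rightarrow> 'm"
  assumes R: "bihom_lcsa sR GR dR br \<alpha> \<beta>"
    and regular: "bij \<alpha>" "bij \<beta>"
    and M: "bihom_conf_module sR GR dR br \<alpha> \<beta> sM GM dM \<rho> \<phi> \<psi>"
    and psi_inv: "bij \<psi>"
  shows "bihom_lcsa (prod_scale sR sM) (prod_grading GR GM) (map_prod dR dM)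
           (sd_bracket GR br \<alpha> \<beta> sM GM dM \<rho> \<phi> \<psi>) (map_prod \<alpha> \<phi>) (map_prod \<beta> \<psi>)"
proof -
  interpret bihom_module_setting sR GR dR br \<alpha> \<beta> sM GM dM \<rho> \<phi> \<psi>
    by (rule bihom_module_setting.intro[OF R regular(1) M psi_inv])
  show ?thesis by (rule bihom_lcsa_semidirect_sum)
qed

end
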